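(* Let $n\ge 3$, let $C=\bigcap_{i=1}^{m}\{x\in\mathbb{R}^n:\langle x,v_i\rangle\ge 0\}$ be a strictly convex good cone with $C\setminus\{0\}\subset\{x_n>0\}$ satisfying the smoothness criterion, and let $M=P^{\lambda}=(T^n\times P)/\Delta$ (the good contact toric manifold associated with $C$) and $N=P^{\tilde\lambda}=(T^{n-1}\times P)/\widetilde{\Delta}$ (the symplectic toric manifold associated with $P$). Then $M$ is a principal $S^1$-bundle over $N$, with projection \[d:M\to N,\qquad [t,p]\mapsto[\tilde t,p],\] where for $t=(e^{i\theta_1},\dots,e^{i\theta_n})\in T^n$, $\tilde t=(e^{i\theta_1},\dots,e^{i\theta_{n-1}})\in T^{n-1}$ is $t$ with the last coordinate dropped.
   Context: A good cone in $\mathbb{R}^n$ is a rational polyhedral cone $C=\bigcap_{i=1}^m\{x:\langle x,v_i\rangle\ge 0\}$ (inequalities minimal), with facets $F_i$ and primitive inward normals $v_i=(v_{i1},\dots,v_{in})\in\mathbb{Z}^n$, such that for $0<l<n$ every codimension-$l$ face is the intersection of exactly $l$ facets and the corresponding normals generate a rank-$l$ direct summand of $\mathbb{Z}^n$; strictly convex means $C$ contains no line. $P=C\cap\{x_n=1\}$, identified with $\{y\in\mathbb{R}^{n-1}:\langle y,\tilde v_i\rangle\ge -v_{in}\}$ where $\tilde v_i=(v_{i1},\dots,v_{i,n-1})$; its facets are $\widetilde{F}_i=F_i\cap P$. Smoothness criterion: $P$ is a Delzant polytope in $\mathbb{R}^{n-1}$ and each $\tilde v_i$ is primitive in $\mathbb{Z}^{n-1}$.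 $\Delta$ is the equivalence relation on $T^n\times P$: $(g,p)\Delta(h,q)$ iff $p=q$ and $g^{-1}h$ lies in the closed subgroup of $T^n=\mathbb{R}^n/\mathbb{Z}^n$ generated by the images of the lines $\mathbb{R}v_i$, $p\in\widetilde{F}_i$; $\widetilde{\Delta}$ is the analogous relation on $T^{n-1}\times P$ using the vectors $\tilde v_i$ in $T^{n-1}=\mathbb{R}^{n-1}/\mathbb{Z}^{n-1}$. Here $P^{\lambda}$ is $T^n$-equivariantly homeomorphic to the good contact toric manifold associated with $C$, and $P^{\tilde\lambda}$ to the symplectic toric manifold with Delzant polytope $P$. The $S^1$ acting is the last circle factor $\{(1,\dots,1,e^{i\theta})\}\subset T^n$, acting on the first factor. *)

theory Defs
  imports "HOL-Analysis.Analysis"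
begin

text \<open>R^n is modelled as (real^('k option)) with n = CARD('k) + 1;
 the last coordinate x_n is the coordinate indexed by None, and R^{n-1} = (real^'k)
 (coordinate Some j of R^n corresponds to coordinate j of R^{n-1}). The torus T^a = R^a/Z^a is realised as the set of
 vectors in (complex^'a) all of whose entries have modulus 1 (x mod Z^a corresponds
 to the vector with entries exp(2 pi i x_j)).\<close>

definition rv :: "(int^'a) \<Rightarrow> (real^'a)" where
  "rv w = (\<chi> j. real_of_int (w $ j))"

definition zsmul :: "int \<Rightarrow> (int^'a) \<Rightarrow> (int^'a)" where
  "zsmul c w = (\<chi> j. c * w $ j)"

definition primitive :: "(int^'a) \<Rightarrow> bool" where
  "primitive w \<longleftrightarrow> (\<forall>c u. w = zsmul c u \<longrightarrow> c = 1 \<or> c = -1)"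

definition zspan :: "(int^'a) set \<Rightarrow> (int^'a) set" where
  "zspan S = {(\<Sum>s\<in>S. zsmul (c s) s) | c. True}"

definition direct_summand :: "(int^'a) set \<Rightarrow> bool" where
  "direct_summand L \<longleftrightarrow> (\<exists>L'. 0 \<in> L' \<and> (\<forall>a\<in>L'. \<forall>b\<in>L'. a + b \<in> L' \<and> - a \<in> L')
      \<and> L \<inter> L' = {0} \<and> (\<forall>w. \<exists>a\<in>L. \<exists>b\<in>L'. w = a + b))"

definition zrank :: "(int^'a) set \<Rightarrow> nat" where
  "zrank S = dim (rv ` S)"

definition pcone :: "nat \<Rightarrow> (nat \<Rightarrow> (int^'n)) \<Rightarrow> (real^'n) set" where
  "pcone m v = {x. \<forall>i<m. 0 \<le> x \<bullet> rv (v i)}"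

definition cone_facet :: "nat \<Rightarrow> (nat \<Rightarrow> (int^'n)) \<Rightarrow> nat \<Rightarrow> (real^'n) set" where
  "cone_facet m v i = {x \<in> pcone m v. x \<bullet> rv (v i) = 0}"

definition good_cone :: "nat \<Rightarrow> (nat \<Rightarrow> (int^'n)) \<Rightarrow> bool" where
  "good_cone m v \<longleftrightarrow>
     (\<forall>i<m. primitive (v i)) \<and>
     (\<forall>i<m. pcone m v \<noteq> {x. \<forall>j<m. j \<noteq> i \<longrightarrow> 0 \<le> x \<bullet> rv (v j)}) \<and>
     (\<forall>F l. 0 < l \<and> l < CARD('n) \<and> F face_of pcone m v \<and> aff_dim F = int (CARD('n) - l) \<longrightarrow>
        (let I = {i. i < m \<and> F \<subseteq> cone_facet m v i} in
           card I = l \<and> F = {x \<in> pcone m v. \<forall>i\<in>I. x \<in> cone_facet m v i} \<and>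
           zrank (v ` I) = l \<and> direct_summand (zspan (v ` I))))"

definition strictly_convex :: "(real^'n) set \<Rightarrow> bool" where
  "strictly_convex C \<longleftrightarrow> (\<forall>x. x \<noteq> 0 \<longrightarrow> \<not> (x \<in> C \<and> - x \<in> C))"

definition vtil :: "(int^('k::finite option)) \<Rightarrow> (int^'k)" where
  "vtil w = (\<chi> j. w $ Some j)"

text \<open>P = C \<inter> {x_n = 1}, identified with a subset of R^{n-1}.\<close>
definition slice :: "nat \<Rightarrow> (nat \<Rightarrow> (int^('k::finite option))) \<Rightarrow> (real^'k) set" where
  "slice m v = {y. \<forall>i<m. - real_of_int (v i $ None) \<le> y \<bullet> rv (vtil (v i))}"

definition slice_facet :: "nat \<Rightarrow> (nat \<Rightarrow> (int^('k::finite option))) \<Rightarrow> nat \<Rightarrow> (real^'k) set" where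
  "slice_facet m v i = {y \<in> slice m v. y \<bullet> rv (vtil (v i)) = - real_of_int (v i $ None)}"

definition zbasis :: "('a \<Rightarrow> (int^'a)) \<Rightarrow> bool" where
  "zbasis u \<longleftrightarrow> (\<forall>w. \<exists>!c. w = (\<Sum>j\<in>UNIV. zsmul (c j) (u j)))"

text \<open>Delzant polytope in R^k: full-dimensional polytope which is simple (k edges at each
 vertex), rational (edges p + t u_j with u_j integral) and smooth (u_j a Z-basis).\<close>
definition delzant :: "(real^'k::finite) set \<Rightarrow> bool" where
  "delzant P \<longleftrightarrow> polytope P \<and> aff_dim P = int CARD('k) \<and>
     (\<forall>p. p extreme_point_of P \<longrightarrow>
        (\<exists>u::'k \<Rightarrow> (int^'k). zbasis u \<and>
           (\<forall>j. (P \<inter> {p + t *\<^sub>R rv (u j) | t. 0 \<le> t}) edge_of P) \<and>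
           inj (\<lambda>j. P \<inter> {p + t *\<^sub>R rv (u j) | t. 0 \<le> t}) \<and>
           {E. E edge_of P \<and> p \<in> E} = range (\<lambda>j. P \<inter> {p + t *\<^sub>R rv (u j) | t. 0 \<le> t})))"

definition smoothness_criterion :: "nat \<Rightarrow> (nat \<Rightarrow> (int^('k::finite option))) \<Rightarrow> bool" where
  "smoothness_criterion m v \<longleftrightarrow> delzant (slice m v) \<and> (\<forall>i<m. primitive (vtil (v i)))"

definition torus :: "(complex^'a) set" where
  "torus = {t. \<forall>j. norm (t $ j) = 1}"

definition tmul :: "(complex^'a) \<Rightarrow> (complex^'a) \<Rightarrow> (complex^'a)" where
  "tmul s t = (\<chi> j. s $ j * t $ j)"

definition tinv :: "(complex^'a) \<Rightarrow> (complex^'a)" where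
  "tinv t = (\<chi> j. inverse (t $ j))"

definition tone :: "(complex^'a)" where
  "tone = (\<chi> j. 1)"

text \<open>Image in T^a = R^a/Z^a of the line R w.\<close>
definition tline :: "(int^'a) \<Rightarrow> (complex^'a) set" where
  "tline w = {(\<chi> j. cis (2 * pi * s * real_of_int (w $ j))) | s. True}"

definition closed_subgroup_gen :: "(complex^'a) set \<Rightarrow> (complex^'a) set" where
  "closed_subgroup_gen S = \<Inter>{H. H \<subseteq> torus \<and> closed H \<and> tone \<in> H \<and>
      (\<forall>a\<in>H. \<forall>b\<in>H. tmul a b \<in> H \<and> tinv a \<in> H) \<and> S \<subseteq> H}"

definition tor_rel :: "nat \<Rightarrow> (nat \<Rightarrow> (int^'a)) \<Rightarrow> ('b set) \<Rightarrow> (nat \<Rightarrow> 'b set)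
    \<Rightarrow> (((complex^'a) \<times> 'b) \<times> ((complex^'a) \<times> 'b)) set" where
  "tor_rel m w P Fac = {((g, p), (h, q)). g \<in> torus \<and> h \<in> torus \<and> p \<in> P \<and> q = p \<and>
      tmul (tinv g) h \<in> closed_subgroup_gen (\<Union>i\<in>{i. i < m \<and> p \<in> Fac i}. tline (w i))}"

definition quotient_topology :: "'a topology \<Rightarrow> ('a \<times> 'a) set \<Rightarrow> 'a set topology" where
  "quotient_topology X R = topology (\<lambda>U. U \<subseteq> topspace X // R \<and> openin X (\<Union>U))"

text \<open>Map induced on equivalence classes: a class goes to the union of the classes of
 the images of its elements (a single class when the map is well defined).\<close>
definition induced_map :: "('b \<times> 'b) set \<Rightarrow> ('a \<Rightarrow> 'b) \<Rightarrow> 'a set \<Rightarrow> 'b set" where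
  "induced_map R f X = (\<Union>x\<in>X. R `` {f x})"

definition circle :: "complex set" where
  "circle = sphere 0 1"

definition principal_S1_bundle ::
   "'e topology \<Rightarrow> 'b topology \<Rightarrow> (complex \<Rightarrow> 'e \<Rightarrow> 'e) \<Rightarrow> ('e \<Rightarrow> 'b) \<Rightarrow> bool" where
  "principal_S1_bundle E B act d \<longleftrightarrow>
     continuous_map E B d \<and> d ` topspace E = topspace B \<and>
     continuous_map (prod_topology (top_of_set circle) E) E (\<lambda>(z, x). act z x) \<and>
     (\<forall>x\<in>topspace E. act 1 x = x) \<and>
     (\<forall>z\<in>circle. \<forall>w\<in>circle. \<forall>x\<in>topspace E. act (z * w) x = act z (act w x)) \<and>
     (\<forall>z\<in>circle. \<forall>x\<in>topspace E. d (act z x) = d x) \<and>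
     (\<forall>b\<in>topspace B. \<exists>U \<phi>. openin B U \<and> b \<in> U \<and>
        homeomorphic_map (subtopology E {x \<in> topspace E. d x \<in> U})
                         (prod_topology (subtopology B U) (top_of_set circle)) \<phi> \<and>
        (\<forall>x\<in>topspace E. d x \<in> U \<longrightarrow> fst (\<phi> x) = d x) \<and>
        (\<forall>z\<in>circle. \<forall>x\<in>topspace E. d x \<in> U \<longrightarrow> snd (\<phi> (act z x)) = z * snd (\<phi> x)))"

definition rel_M :: "nat \<Rightarrow> (nat \<Rightarrow> (int^('k::finite option)))
    \<Rightarrow> (((complex^('k option)) \<times> (real^'k)) \<times> ((complex^('k option)) \<times> (real^'k))) set" where
  "rel_M m v = tor_rel m v (slice m v) (slice_facet m v)"

definition rel_N :: "nat \<Rightarrow> (nat \<Rightarrow> (int^('k::finite option)))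
    \<Rightarrow> (((complex^'k) \<times> (real^'k)) \<times> ((complex^'k) \<times> (real^'k))) set" where
  "rel_N m v = tor_rel m (\<lambda>i. vtil (v i)) (slice m v) (slice_facet m v)"

definition space_M :: "nat \<Rightarrow> (nat \<Rightarrow> (int^('k::finite option))) \<Rightarrow> ((complex^('k option)) \<times> (real^'k)) set topology" where
  "space_M m v = quotient_topology (top_of_set (torus \<times> slice m v)) (rel_M m v)"

definition space_N :: "nat \<Rightarrow> (nat \<Rightarrow> (int^('k::finite option))) \<Rightarrow> ((complex^'k) \<times> (real^'k)) set topology" where
  "space_N m v = quotient_topology (top_of_set (torus \<times> slice m v)) (rel_N m v)"

definition ttil :: "(complex^('k::finite option)) \<Rightarrow> (complex^'k)" where
  "ttil t = (\<chi> j. t $ Some j)"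

definition proj_d :: "nat \<Rightarrow> (nat \<Rightarrow> (int^('k::finite option)))
    \<Rightarrow> ((complex^('k option)) \<times> (real^'k)) set \<Rightarrow> ((complex^'k) \<times> (real^'k)) set" where
  "proj_d m v = induced_map (rel_N m v) (\<lambda>(t, p). (ttil t, p))"

definition last_circle :: "complex \<Rightarrow> (complex^('k::finite option))" where
  "last_circle z = (\<chi> j. if j = None then z else 1)"

definition act_M :: "nat \<Rightarrow> (nat \<Rightarrow> (int^('k::finite option)))
    \<Rightarrow> complex \<Rightarrow> ((complex^('k option)) \<times> (real^'k)) set \<Rightarrow> ((complex^('k option)) \<times> (real^'k)) set" where
  "act_M m v z = induced_map (rel_M m v) (\<lambda>(t, p). (tmul (last_circle z) t, p))"

end

theory Submission
  imports Defs
begin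

text \<open>Local triviality is an integrality statement: near a point p of P every
  facet through a nearby point contains a fixed vertex p0 of P, and goodness of the cone together
  with smoothness of P yield an integral b with (b, 1) orthogonal to the normals of all facets
  through p0. The character t \<mapsto> t^(b, 1) of T^n is then trivial on the isotropy groups of M
  over that neighbourhood, so it is a well defined, equivariant fibre coordinate; the chart it
  gives is inverted using the homomorphic section s \<mapsto> (s, s^(-b)) of the truncation.\<close>

section \<open>The cone over the polytope\<close>

definition ext_last :: "'a^'k \<Rightarrow> 'a \<Rightarrow> 'a^('k::finite option)" where
  "ext_last x c = (\<chi> j. case j of None \<Rightarrow> c | Some l \<Rightarrow> x $ l)"

definition drop_last :: "'a^('k::finite option) \<Rightarrow> 'a^'k" where
  "drop_last x = (\<chi> l. x $ Some l)"

lemma ext_last_None [simp]: "ext_last x c $ None = c"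
  and ext_last_Some [simp]: "ext_last x c $ Some l = x $ l"
  and drop_last_ext_last [simp]: "drop_last (ext_last x c) = x"
  and drop_last_zero [simp]: "drop_last 0 = 0"
  and ttil_ext_last [simp]: "ttil (ext_last s z) = s"
  by (simp_all add: ext_last_def drop_last_def ttil_def vec_eq_iff)

lemma ext_last_ttil: "ext_last (ttil t) (t $ None) = t"
  by (auto simp: ext_last_def ttil_def vec_eq_iff split: option.splits)

lemma ext_last_one_neq_zero [simp]: "ext_last x (1::'a::zero_neq_one) \<noteq> 0"
  by (metis ext_last_None zero_index zero_neq_one)

lemma ext_last_inj: "ext_last x c = ext_last y d \<longleftrightarrow> x = y \<and> c = d"
  by (metis drop_last_ext_last ext_last_None)

lemma sum_UNIV_option:
  fixes f :: "'k::finite option \<Rightarrow> 'a::comm_monoid_add"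
  shows "(\<Sum>j\<in>UNIV. f j) = f None + (\<Sum>l\<in>UNIV. f (Some l))"
proof -
  have "sum f (insert None (range Some)) = f None + (\<Sum>l\<in>UNIV. f (Some l))"
    by (simp add: sum.reindex)
  then show ?thesis by (simp only: UNIV_option_conv[symmetric])
qed

lemma prod_UNIV_option:
  fixes f :: "'k::finite option \<Rightarrow> 'a::comm_monoid_mult"
  shows "(\<Prod>j\<in>UNIV. f j) = f None * (\<Prod>l\<in>UNIV. f (Some l))"
proof -
  have "prod f (insert None (range Some)) = f None * (\<Prod>l\<in>UNIV. f (Some l))"
    by (simp add: prod.reindex)
  then show ?thesis by (simp only: UNIV_option_conv[symmetric])
qed

lemma inner_rv_split:
  fixes x :: "real^('k::finite option)"
  shows "x \<bullet> rv w = drop_last x \<bullet> rv (vtil w) + x $ None * real_of_int (w $ None)"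
  by (simp add: inner_vec_def sum_UNIV_option rv_def vtil_def drop_last_def)

lemma ext_last_in_pcone: "ext_last q 1 \<in> pcone m v \<longleftrightarrow> q \<in> slice m v"
  by (auto simp: pcone_def slice_def inner_rv_split)

lemma ext_last_in_cone_facet: "ext_last q 1 \<in> cone_facet m v i \<longleftrightarrow> q \<in> slice_facet m v i"
  by (auto simp: cone_facet_def slice_facet_def ext_last_in_pcone inner_rv_split)

lemma ext_last_affine:
  "u + w = 1 \<Longrightarrow> u *\<^sub>R ext_last x 1 + w *\<^sub>R ext_last y 1 = ext_last (u *\<^sub>R x + w *\<^sub>R y) 1"
  by (auto simp: ext_last_def vec_eq_iff simp flip: scaleR_add_left split: option.splits)

lemma scaleR_ext_last_drop_last:
  fixes x :: "real^('k::finite option)"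
  assumes "x $ None \<noteq> 0"
  shows "x = x $ None *\<^sub>R ext_last (drop_last x /\<^sub>R x $ None) 1"
  using assms by (auto simp: vec_eq_iff ext_last_def drop_last_def split: option.splits)

lemma drop_last_scaled_in_slice:
  assumes "x \<in> pcone m v" "x $ None > 0"
  shows "drop_last x /\<^sub>R x $ None \<in> slice m v"
proof -
  have "\<forall>i<m. 0 \<le> x $ None * (ext_last (drop_last x /\<^sub>R x $ None) 1 \<bullet> rv (v i))"
    using assms(1) scaleR_ext_last_drop_last[of x] assms(2) unfolding pcone_def
    by (metis (no_types, lifting) inner_scaleR_left less_irrefl mem_Collect_eq)
  then have "ext_last (drop_last x /\<^sub>R x $ None) 1 \<in> pcone m v"
    using assms(2) unfolding pcone_def by (simp add: zero_le_mult_iff)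
  then show ?thesis by (simp add: ext_last_in_pcone)
qed

lemma scaleR_eq_convex_combination:
  fixes q x y :: "'a::real_vector"
  assumes "(\<alpha> + \<beta>) *\<^sub>R q = \<alpha> *\<^sub>R x + \<beta> *\<^sub>R y" "0 < \<alpha>" "0 < \<beta>"
  shows "q = (1 - \<beta> / (\<alpha> + \<beta>)) *\<^sub>R x + (\<beta> / (\<alpha> + \<beta>)) *\<^sub>R y"
    and "0 < \<beta> / (\<alpha> + \<beta>)" "\<beta> / (\<alpha> + \<beta>) < 1"
proof -
  have "1 - \<beta> / (\<alpha> + \<beta>) = \<alpha> / (\<alpha> + \<beta>)" using assms(2,3) by (simp add: field_simps)
  moreover have "q = (1 / (\<alpha> + \<beta>)) *\<^sub>R ((\<alpha> + \<beta>) *\<^sub>R q)" using assms(2,3) by simp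
  ultimately show "q = (1 - \<beta> / (\<alpha> + \<beta>)) *\<^sub>R x + (\<beta> / (\<alpha> + \<beta>)) *\<^sub>R y"
    unfolding assms(1) by (simp add: scaleR_right_distrib)
  show "0 < \<beta> / (\<alpha> + \<beta>)" "\<beta> / (\<alpha> + \<beta>) < 1" using assms(2,3) by simp_all
qed

lemma conic_hull_ext_last_face_absorbs:
  fixes v :: "nat \<Rightarrow> int^('k::finite option)"
  assumes pos: "\<forall>x\<in>pcone m v. x \<noteq> 0 \<longrightarrow> x $ None > 0"
    and G: "G face_of slice m v"
    and a: "a \<in> pcone m v" and b: "b \<in> pcone m v" and u: "0 < u" "u < 1"
    and z: "(1 - u) *\<^sub>R a + u *\<^sub>R b \<in> conic hull ((\<lambda>q. ext_last q 1) ` G)"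
  shows "a \<in> conic hull ((\<lambda>q. ext_last q 1) ` G)"
proof (cases "a = 0")
  case True
  then show ?thesis using z by (auto simp: conic_hull_explicit)
next
  case False
  then have an: "a $ None > 0" using pos a by blast
  define qa where "qa = drop_last a /\<^sub>R a $ None"
  have qa: "qa \<in> slice m v" using drop_last_scaled_in_slice a an qa_def by blast
  have aeq: "a = a $ None *\<^sub>R ext_last qa 1" using scaleR_ext_last_drop_last an qa_def by force
  obtain c q where zc: "(1 - u) *\<^sub>R a + u *\<^sub>R b = c *\<^sub>R ext_last q 1" "q \<in> G"
    using z by (auto simp: conic_hull_explicit)
  have cn: "c = (1-u) * a $ None + u * b $ None"
    using arg_cong[OF zc(1), of "\<lambda>x. x $ None"] by simp
  have "c *\<^sub>R q = (1-u) *\<^sub>R drop_last a + u *\<^sub>R drop_last b"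
    using arg_cong[OF zc(1), of drop_last] by (simp add: drop_last_def vec_eq_iff)
  then have cq: "c *\<^sub>R q = ((1-u) * a $ None) *\<^sub>R qa + u *\<^sub>R drop_last b"
    using an by (simp add: qa_def)
  have "qa \<in> G"
  proof (cases "b = 0")
    case True
    then have "q = qa" using cq cn u an by simp
    then show ?thesis using zc(2) by simp
  next
    case False
    then have bn: "b $ None > 0" using pos b by blast
    define qb where "qb = drop_last b /\<^sub>R b $ None"
    have qb: "qb \<in> slice m v" using drop_last_scaled_in_slice b bn qb_def by blast
    define s where "s = u * b $ None / c"
    have "c *\<^sub>R q = ((1-u) * a $ None) *\<^sub>R qa + (u * b $ None) *\<^sub>R qb"
      using cq bn by (simp add: qb_def)
    then have "q = (1 - s) *\<^sub>R qa + s *\<^sub>R qb" and s: "0 < s" "s < 1"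
      using scaleR_eq_convex_combination[of "(1-u) * a $ None" "u * b $ None"] cn an bn u
      by (simp_all add: s_def)
    then show ?thesis
      using face_ofD[OF G, of q qa qb] s qa qb zc(2) by (cases "qa = qb") (auto simp: in_segment)
  qed
  then show ?thesis using aeq an by (auto simp: conic_hull_explicit intro!: exI[of _ "a $ None"])
qed

lemma face_of_pcone_conic_hull_ext_last:
  fixes v :: "nat \<Rightarrow> int^('k::finite option)"
  assumes pos: "\<forall>x\<in>pcone m v. x \<noteq> 0 \<longrightarrow> x $ None > 0"
    and G: "G face_of slice m v"
  shows "conic hull ((\<lambda>q. ext_last q 1) ` G) face_of pcone m v"
  unfolding face_of_def
proof (intro conjI ballI impI)
  show "conic hull (\<lambda>q. ext_last q 1) ` G \<subseteq> pcone m v"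
    using face_of_imp_subset[OF G]
    by (auto simp: conic_hull_explicit pcone_def ext_last_in_pcone[symmetric])
  have "convex ((\<lambda>q. ext_last q 1) ` G)"
    using face_of_imp_convex[OF G] unfolding convex_def
    by (auto simp: ext_last_affine intro!: imageI)
  then show "convex (conic hull (\<lambda>q. ext_last q 1) ` G)" by (rule convex_conic_hull)
  fix a b z
  assume ab: "a \<in> pcone m v" "b \<in> pcone m v" and z: "z \<in> conic hull (\<lambda>q. ext_last q 1) ` G"
    and "z \<in> open_segment a b"
  then obtain u where u: "0 < u" "u < 1" "z = (1 - u) *\<^sub>R a + u *\<^sub>R b" by (auto simp: in_segment)
  show "a \<in> conic hull (\<lambda>q. ext_last q 1) ` G"
    using conic_hull_ext_last_face_absorbs[OF pos G ab u(1,2)] z u(3) by simp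
  show "b \<in> conic hull (\<lambda>q. ext_last q 1) ` G"
    using conic_hull_ext_last_face_absorbs[OF pos G ab(2,1), of "1 - u"] z u by (simp add: add.commute)
qed

lemma card_UNIV_option: "CARD('k::finite option) = Suc CARD('k)"
proof -
  have "card (insert None (range (Some :: 'k \<Rightarrow> 'k option))) = Suc CARD('k)"
    by (simp add: card_image)
  then show ?thesis by (simp only: UNIV_option_conv[symmetric])
qed

lemma span_conic_hull: "span (conic hull S) = span S"
proof -
  have "conic hull S \<subseteq> span S" by (rule hull_minimal) (auto intro: span_base)
  then show ?thesis unfolding span_eq using hull_subset[of S conic] by (auto intro: span_base)
qed

lemma ext_last_affine_hull_in_span:
  fixes T :: "(real^'k::finite) set"
  assumes "q \<in> affine hull T"
  shows "ext_last q 1 \<in> span ((\<lambda>q. ext_last q 1) ` T)"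
proof -
  have "affine {q. ext_last q 1 \<in> span ((\<lambda>q. ext_last q (1::real)) ` T)}"
    unfolding affine_def by (auto simp flip: ext_last_affine intro!: span_add span_mul)
  then have "affine hull T \<subseteq> {q. ext_last q 1 \<in> span ((\<lambda>q. ext_last q (1::real)) ` T)}"
    by (intro hull_minimal) (auto intro: span_base)
  then show ?thesis using assms by blast
qed

lemma aff_dim_conic_hull_ext_last:
  fixes S T :: "(real^'k::finite) set"
  assumes "T \<subseteq> S" "S \<subseteq> affine hull T" "T \<noteq> {}" "independent ((\<lambda>q. ext_last q 1) ` T)"
  shows "aff_dim (conic hull ((\<lambda>q. ext_last q 1) ` S)) = int (card T)"
proof -
  let ?e = "\<lambda>q. ext_last q (1::real)"
  have span_eq_T: "span (conic hull (?e ` S)) = span (?e ` T)"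
    unfolding span_conic_hull span_eq using assms(1,2) ext_last_affine_hull_in_span
    by (auto intro: span_base)
  have "aff_dim (conic hull (?e ` S)) = int (dim (conic hull (?e ` S)))"
  proof (rule aff_dim_zero, rule hull_inc)
    show "0 \<in> conic hull (?e ` S)" using assms(1,3) by auto
  qed
  also have "dim (conic hull (?e ` S)) = dim (?e ` T)"
    by (metis dim_span span_eq_T)
  also have "\<dots> = card T"
    using dim_eq_card_independent[OF assms(4)] card_image[of ?e T]
    by (simp add: inj_on_def ext_last_inj)
  finally show ?thesis .
qed

lemma independent_ext_last_pair:
  fixes p q :: "real^'k::finite"
  assumes "p \<noteq> q"
  shows "independent {ext_last p 1, ext_last q 1}"
proof (intro independent_insertI)
  show "ext_last p 1 \<notin> span {ext_last q 1}"
  proof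
    assume "ext_last p 1 \<in> span {ext_last q 1}"
    then obtain k where k: "ext_last p 1 = k *\<^sub>R ext_last q 1" by (auto simp: span_singleton)
    then have "(k *\<^sub>R ext_last q 1) $ None = 1" by (metis ext_last_None)
    then have "k = 1" by simp
    then show False using k assms by (simp add: ext_last_inj)
  qed
  show "ext_last q 1 \<notin> span {}" by simp
qed (simp add: independent_empty)

lemma conic_hull_ext_last_subset_cone_facet:
  "conic hull ((\<lambda>q. ext_last q 1) ` S) \<subseteq> cone_facet m v i \<longleftrightarrow> S \<subseteq> slice_facet m v i"
proof
  assume "conic hull ((\<lambda>q. ext_last q 1) ` S) \<subseteq> cone_facet m v i"
  then have "ext_last q 1 \<in> cone_facet m v i" if "q \<in> S" for q
    using that by (meson hull_inc image_eqI subsetD)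
  then show "S \<subseteq> slice_facet m v i" by (auto simp: ext_last_in_cone_facet)
next
  assume "S \<subseteq> slice_facet m v i"
  then show "conic hull ((\<lambda>q. ext_last q 1) ` S) \<subseteq> cone_facet m v i"
    by (auto simp: conic_hull_explicit cone_facet_def pcone_def
        simp flip: ext_last_in_cone_facet)
qed

lemma good_cone_card_facets_containing:
  fixes v :: "nat \<Rightarrow> int^('k::finite option)"
  assumes gc: "good_cone m v" and pos: "\<forall>x\<in>pcone m v. x \<noteq> 0 \<longrightarrow> x $ None > 0"
    and G: "G face_of slice m v"
    and T: "T \<subseteq> G" "G \<subseteq> affine hull T" "T \<noteq> {}" "independent ((\<lambda>q. ext_last q 1) ` T)"
    and card_T: "card T \<le> CARD('k)"
  shows "card {i. i < m \<and> G \<subseteq> slice_facet m v i} = Suc CARD('k) - card T"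
proof -
  let ?K = "conic hull ((\<lambda>q. ext_last q 1) ` G)"
  have "finite T"
    using independent_imp_finite[OF T(4)] by (rule finite_imageD) (simp add: inj_on_def ext_last_inj)
  then have "card T > 0" using T(3) by (simp add: card_gt_0_iff)
  have l: "0 < Suc CARD('k) - card T" "Suc CARD('k) - card T < CARD('k option)"
    using card_T \<open>card T > 0\<close> by (auto simp: card_UNIV_option)
  have "aff_dim ?K = int (CARD('k option) - (Suc CARD('k) - card T))"
    using aff_dim_conic_hull_ext_last[OF T] card_T by (simp add: card_UNIV_option)
  then have "card {i. i < m \<and> ?K \<subseteq> cone_facet m v i} = Suc CARD('k) - card T"
    using gc face_of_pcone_conic_hull_ext_last[OF pos G] l unfolding good_cone_def Let_def by blast
  then show ?thesis by (simp add: conic_hull_ext_last_subset_cone_facet)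
qed

lemma face_of_slice_facet:
  assumes "convex (slice m v)" "i < m"
  shows "slice_facet m v i face_of slice m v"
proof -
  have "slice_facet m v i = slice m v \<inter> {y. rv (vtil (v i)) \<bullet> y = - real_of_int (v i $ None)}"
    by (auto simp: slice_facet_def inner_commute)
  also have "\<dots> face_of slice m v"
    by (rule face_of_Int_supporting_hyperplane_ge[OF assms(1)])
      (use assms(2) in \<open>auto simp: slice_def inner_commute\<close>)
  finally show ?thesis .
qed

lemma closed_slice_facet: "closed (slice m v) \<Longrightarrow> closed (slice_facet m v i)"
proof -
  assume "closed (slice m v)"
  moreover have "slice_facet m v i = slice m v \<inter> {y. rv (vtil (v i)) \<bullet> y = - real_of_int (v i $ None)}"
    by (auto simp: slice_facet_def inner_commute)
  ultimately show ?thesis by (simp add: closed_Int closed_hyperplane)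
qed

section \<open>Integral solutions at the vertices\<close>

definition idot :: "int^'a \<Rightarrow> int^'a \<Rightarrow> int" where
  "idot a b = (\<Sum>l\<in>UNIV. a $ l * b $ l)"

lemma idot_commute: "idot a b = idot b a"
  by (simp add: idot_def mult.commute)

lemma idot_zsmul_right: "idot a (zsmul c b) = c * idot a b"
  by (simp add: idot_def zsmul_def sum_distrib_left mult_ac)

lemma idot_sum_right: "idot a (sum f S) = (\<Sum>s\<in>S. idot a (f s))"
  by (induction S rule: infinite_finite_induct) (auto simp: idot_def sum.distrib algebra_simps)

lemma idot_unit_vector: "idot a (\<chi> l'. if l' = l then 1 else 0) = a $ l"
  by (simp add: idot_def if_distrib cong: if_cong)

lemma idot_self_eq_0: "idot a a = 0 \<Longrightarrow> a = 0"
proof -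
  assume "idot a a = 0"
  then have "\<forall>l\<in>UNIV. a $ l * a $ l = 0"
    unfolding idot_def by (subst (asm) sum_nonneg_eq_0_iff) auto
  then show "a = 0" by (simp add: vec_eq_iff)
qed

lemma inner_rv: "rv a \<bullet> rv b = real_of_int (idot a b)"
  by (simp add: inner_vec_def rv_def idot_def)

lemma idot_ext_last: "idot (ext_last b c) w = idot b (vtil w) + c * w $ None"
  by (simp add: idot_def sum_UNIV_option vtil_def mult.commute)

lemma not_primitive_zero: "\<not> primitive 0"
  unfolding primitive_def by (auto intro!: exI[of _ 2] exI[of _ 0] simp: zsmul_def vec_eq_iff)

lemma zbasis_idot_nonzero:
  assumes "zbasis u" "w \<noteq> 0"
  shows "\<exists>j. idot w (u j) \<noteq> 0"
proof (rule ccontr)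
  assume "\<not> ?thesis"
  moreover obtain c where "w = (\<Sum>j\<in>UNIV. zsmul (c j) (u j))"
    using assms(1) unfolding zbasis_def by metis
  ultimately have "idot w w = 0" by (simp add: idot_sum_right idot_zsmul_right)
  then show False using assms(2) idot_self_eq_0 by blast
qed

lemma primitive_idot_zbasis_unit:
  assumes zb: "zbasis u" and prim: "primitive w" and zero: "\<And>j. j \<noteq> j0 \<Longrightarrow> idot w (u j) = 0"
  shows "idot w (u j0) = 1 \<or> idot w (u j0) = -1"
proof -
  have "\<forall>l. \<exists>c. (\<chi> l'. if l' = l then 1 else 0) = (\<Sum>j\<in>UNIV. zsmul (c j) (u j))"
    using zb unfolding zbasis_def by metis
  then obtain C where C: "\<And>l. (\<chi> l'. if l' = l then 1 else 0) = (\<Sum>j\<in>UNIV. zsmul (C l j) (u j))"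
    by metis
  have "w $ l = C l j0 * idot w (u j0)" for l
  proof -
    have "w $ l = idot w (\<chi> l'. if l' = l then 1 else 0)" by (simp add: idot_unit_vector)
    also have "\<dots> = (\<Sum>j\<in>UNIV. C l j * idot w (u j))"
      by (simp add: C[of l] idot_sum_right idot_zsmul_right)
    also have "\<dots> = C l j0 * idot w (u j0)"
    proof -
      have "(\<Sum>j\<in>UNIV. C l j * idot w (u j)) = (\<Sum>j\<in>UNIV. if j = j0 then C l j * idot w (u j) else 0)"
        by (rule sum.cong) (auto simp: zero)
      then show ?thesis by simp
    qed
    finally show ?thesis .
  qed
  then have "w = zsmul (idot w (u j0)) (\<chi> l. C l j0)"
    by (simp add: zsmul_def vec_eq_iff mult.commute)
  then show ?thesis using prim unfolding primitive_def by blast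
qed

lemma zbasis_sparse_pairing:
  fixes I :: "nat set" and w :: "nat \<Rightarrow> int^'k::finite" and u :: "'k \<Rightarrow> int^'k"
  assumes fin: "finite I" and card_I: "card I = CARD('k)" and zb: "zbasis u"
    and prim: "\<forall>i\<in>I. primitive (w i)"
    and sparse: "\<forall>j. \<forall>i\<in>I. \<forall>i'\<in>I.
      idot (w i) (u j) \<noteq> 0 \<longrightarrow> idot (w i') (u j) \<noteq> 0 \<longrightarrow> i = i'"
  obtains \<sigma> where "inj_on \<sigma> I"
    and "\<And>i j. i \<in> I \<Longrightarrow> idot (w i) (u j) \<noteq> 0 \<longleftrightarrow> j = \<sigma> i"
proof -
  define \<sigma> where "\<sigma> i = (SOME j. idot (w i) (u j) \<noteq> 0)" for i
  have \<sigma>: "idot (w i) (u (\<sigma> i)) \<noteq> 0" if "i \<in> I" for i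
  proof -
    have "w i \<noteq> 0" using that prim not_primitive_zero by metis
    then have "\<exists>j. idot (w i) (u j) \<noteq> 0" by (rule zbasis_idot_nonzero[OF zb])
    then show ?thesis unfolding \<sigma>_def by (rule someI_ex)
  qed
  have inj: "inj_on \<sigma> I"
  proof (rule inj_onI)
    fix i i' assume i: "i \<in> I" and i': "i' \<in> I" and "\<sigma> i = \<sigma> i'"
    then show "i = i'" using sparse[rule_format, OF i i' \<sigma>[OF i]] \<sigma>[OF i'] by simp
  qed
  have "\<sigma> ` I = UNIV"
    using card_subset_eq[of UNIV "\<sigma> ` I"] card_image[OF inj] card_I by simp
  have "j = \<sigma> i" if "i \<in> I" "idot (w i) (u j) \<noteq> 0" for i j
  proof -
    obtain i' where i': "i' \<in> I" and j: "j = \<sigma> i'" using \<open>\<sigma> ` I = UNIV\<close> by (metis UNIV_I imageE)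
    then have "i = i'" using sparse[rule_format, OF that(1) i' that(2)] \<sigma>[OF i'] by simp
    then show ?thesis using j by simp
  qed
  then show thesis using that[OF inj] \<sigma> by blast
qed

text \<open>The w i are, up to sign, the basis dual to u, so every right-hand side is attained.\<close>
lemma int_linear_system_solvable:
  fixes I :: "nat set" and w :: "nat \<Rightarrow> int^'k::finite" and u :: "'k \<Rightarrow> int^'k"
  assumes fin: "finite I" and card_I: "card I = CARD('k)" and zb: "zbasis u"
    and prim: "\<forall>i\<in>I. primitive (w i)"
    and sparse: "\<forall>j. \<forall>i\<in>I. \<forall>i'\<in>I.
      idot (w i) (u j) \<noteq> 0 \<longrightarrow> idot (w i') (u j) \<noteq> 0 \<longrightarrow> i = i'"
  shows "\<exists>b. \<forall>i\<in>I. idot b (w i) = c i"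
proof -
  define A where "A i j = idot (w i) (u j)" for i j
  obtain \<sigma> where inj: "inj_on \<sigma> I"
    and \<sigma>: "\<And>i j. i \<in> I \<Longrightarrow> A i j \<noteq> 0 \<longleftrightarrow> j = \<sigma> i"
    using zbasis_sparse_pairing[OF fin card_I zb prim sparse] unfolding A_def by blast
  have unit: "A i (\<sigma> i) * A i (\<sigma> i) = 1" if "i \<in> I" for i
  proof -
    have "A i (\<sigma> i) = 1 \<or> A i (\<sigma> i) = -1"
      unfolding A_def using prim that \<sigma>[OF that] unfolding A_def
      by (intro primitive_idot_zbasis_unit[OF zb]) auto
    then show ?thesis by auto
  qed
  define b where "b = (\<Sum>i\<in>I. zsmul (c i * A i (\<sigma> i)) (u (\<sigma> i)))"
  have "idot b (w i') = c i'" if i': "i' \<in> I" for i'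
  proof -
    have "idot b (w i') = (\<Sum>i\<in>I. c i * A i (\<sigma> i) * A i' (\<sigma> i))"
      by (simp add: b_def idot_commute[of _ "w i'"] idot_sum_right idot_zsmul_right A_def)
    also have "\<dots> = c i' * A i' (\<sigma> i') * A i' (\<sigma> i')"
    proof -
      have "A i' (\<sigma> i) = 0" if "i \<in> I" "i \<noteq> i'" for i
        using \<sigma>[OF i', of "\<sigma> i"] inj that i' by (metis inj_onD)
      then have "(\<Sum>i\<in>I. c i * A i (\<sigma> i) * A i' (\<sigma> i))
          = (\<Sum>i\<in>I. if i = i' then c i' * A i' (\<sigma> i') * A i' (\<sigma> i') else 0)"
        by (intro sum.cong) auto
      then show ?thesis using fin i' by simp
    qed
    also have "\<dots> = c i'" using unit[OF i'] by (simp add: mult.assoc)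
    finally show ?thesis .
  qed
  then show ?thesis by blast
qed

definition facet_orthogonal ::
    "nat \<Rightarrow> (nat \<Rightarrow> int^('k::finite option)) \<Rightarrow> int^('k option) \<Rightarrow> real^'k \<Rightarrow> bool" where
  "facet_orthogonal m v a q \<longleftrightarrow> (\<forall>i<m. q \<in> slice_facet m v i \<longrightarrow> idot a (v i) = 0)"

lemma card_facets_at_vertex:
  fixes v :: "nat \<Rightarrow> int^('k::finite option)"
  assumes gc: "good_cone m v" and pos: "\<forall>x\<in>pcone m v. x \<noteq> 0 \<longrightarrow> x $ None > 0"
    and p0: "p0 extreme_point_of slice m v"
  shows "card {i. i < m \<and> p0 \<in> slice_facet m v i} = CARD('k)"
proof -
  have "CARD('k) \<ge> 1" by (simp add: Suc_le_eq)
  then show ?thesis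
    using good_cone_card_facets_containing[OF gc pos, of "{p0}" "{p0}"] p0
    by (simp add: face_of_singleton hull_inc)
qed

lemma line_point_in_affine_hull_2:
  fixes p d :: "'a::real_vector"
  assumes "t1 \<noteq> 0"
  shows "p + t *\<^sub>R d \<in> affine hull {p, p + t1 *\<^sub>R d}"
proof -
  have "p + t *\<^sub>R d = (1 - t / t1) *\<^sub>R p + (t / t1) *\<^sub>R (p + t1 *\<^sub>R d)"
    using assms by (simp add: algebra_simps)
  then show ?thesis
    unfolding affine_hull_2 by (intro CollectI exI[of _ "1 - t / t1"] exI[of _ "t / t1"]) simp
qed

lemma card_facets_at_vertex_orthogonal_to_edge:
  fixes v :: "nat \<Rightarrow> int^('k::finite option)"
  assumes card2: "CARD('k) \<ge> 2" and gc: "good_cone m v"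
    and pos: "\<forall>x\<in>pcone m v. x \<noteq> 0 \<longrightarrow> x $ None > 0"
    and p0: "p0 \<in> slice m v"
    and edge: "(slice m v \<inter> {p0 + t *\<^sub>R rv w | t. 0 \<le> t}) edge_of slice m v"
  shows "CARD('k) - 1 \<le> card {i. i < m \<and> p0 \<in> slice_facet m v i \<and> idot (vtil (v i)) w = 0}"
proof -
  define E where "E = slice m v \<inter> {p0 + t *\<^sub>R rv w | t. 0 \<le> t}"
  have E: "E face_of slice m v" "aff_dim E = 1" using edge by (auto simp: E_def edge_of_def)
  have p0E: "p0 \<in> E" unfolding E_def using p0 by (auto intro!: exI[of _ 0])
  obtain p1 where p1E: "p1 \<in> E" and p10: "p1 \<noteq> p0"
  proof (rule ccontr)
    assume "\<not> thesis"
    then have "E = {p0}" using p0E that by blast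
    then show False using E(2) by simp
  qed
  obtain t1 where t1: "p1 = p0 + t1 *\<^sub>R rv w" using p1E E_def by blast
  then have "t1 \<noteq> 0" using p10 by auto
  have "E \<subseteq> affine hull {p0, p1}"
    using line_point_in_affine_hull_2[OF \<open>t1 \<noteq> 0\<close>] unfolding E_def t1 by blast
  moreover have "card {p0, p1} = 2" "{p0, p1} \<subseteq> E" using p10 p0E p1E by auto
  ultimately have "card {i. i < m \<and> E \<subseteq> slice_facet m v i} = Suc CARD('k) - 2"
    using good_cone_card_facets_containing[OF gc pos E(1), of "{p0, p1}"] card2
      independent_ext_last_pair[OF p10[symmetric]]
    by simp
  moreover have "{i. i < m \<and> E \<subseteq> slice_facet m v i}
      \<subseteq> {i. i < m \<and> p0 \<in> slice_facet m v i \<and> idot (vtil (v i)) w = 0}" (is "_ \<subseteq> ?Z")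
  proof safe
    fix i assume "i < m" "E \<subseteq> slice_facet m v i"
    then have "p0 \<in> slice_facet m v i" "p1 \<in> slice_facet m v i" using p0E p1E by auto
    then show "p0 \<in> slice_facet m v i" by simp
    have "t1 * (rv w \<bullet> rv (vtil (v i))) = 0"
      using \<open>p0 \<in> slice_facet m v i\<close> \<open>p1 \<in> slice_facet m v i\<close>
      by (simp add: slice_facet_def t1 inner_add_left)
    then have "real_of_int (idot w (vtil (v i))) = 0" using \<open>t1 \<noteq> 0\<close> by (simp only: inner_rv) simp
    then show "idot (vtil (v i)) w = 0" by (metis idot_commute of_int_eq_0_iff)
  qed
  then have "card {i. i < m \<and> E \<subseteq> slice_facet m v i} \<le> card ?Z" by (intro card_mono) simp_all
  ultimately show ?thesis by simp
qed

text \<open>At a vertex the k facet normals, truncated, are a basis of the lattice up to sign: by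
  smoothness the k edge directions form a lattice basis, and each edge lies on k - 1 of the k
  facets through the vertex.\<close>
lemma vertex_facet_orthogonal:
  fixes v :: "nat \<Rightarrow> int^('k::finite option)"
  assumes card2: "CARD('k) \<ge> 2" and gc: "good_cone m v"
    and pos: "\<forall>x\<in>pcone m v. x \<noteq> 0 \<longrightarrow> x $ None > 0"
    and sm: "smoothness_criterion m v"
    and p0: "p0 extreme_point_of slice m v"
  shows "\<exists>b. facet_orthogonal m v (ext_last b 1) p0"
proof -
  obtain u :: "'k \<Rightarrow> int^'k" where zb: "zbasis u"
    and edges: "\<And>j. (slice m v \<inter> {p0 + t *\<^sub>R rv (u j) | t. 0 \<le> t}) edge_of slice m v"
    using sm p0 unfolding smoothness_criterion_def delzant_def by blast
  define I0 where "I0 = {i. i < m \<and> p0 \<in> slice_facet m v i}"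
  have fin: "finite I0" and card: "card I0 = CARD('k)"
    using card_facets_at_vertex[OF gc pos p0] by (simp_all add: I0_def)
  have p0P: "p0 \<in> slice m v" using p0 by (simp add: extreme_point_of_def)
  have prim: "\<forall>i\<in>I0. primitive (vtil (v i))"
    using sm by (simp add: smoothness_criterion_def I0_def)
  have sparse: "\<forall>j. \<forall>i\<in>I0. \<forall>i'\<in>I0.
      idot (vtil (v i)) (u j) \<noteq> 0 \<longrightarrow> idot (vtil (v i')) (u j) \<noteq> 0 \<longrightarrow> i = i'"
  proof (intro allI ballI impI, rule ccontr)
    fix j i i' assume that: "i \<in> I0" "i' \<in> I0" "idot (vtil (v i)) (u j) \<noteq> 0"
      "idot (vtil (v i')) (u j) \<noteq> 0" and "i \<noteq> i'"
    have sub: "{i. i < m \<and> p0 \<in> slice_facet m v i \<and> idot (vtil (v i)) (u j) = 0} \<subseteq> I0 - {i, i'}"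
      using that by (auto simp: I0_def)
    moreover have "card (I0 - {i, i'}) = CARD('k) - 2"
      using fin card that \<open>i \<noteq> i'\<close> by (simp add: card_Diff_subset)
    ultimately have "card {i. i < m \<and> p0 \<in> slice_facet m v i \<and> idot (vtil (v i)) (u j) = 0} \<le> CARD('k) - 2"
      using card_mono[OF finite_Diff[OF fin] sub] by simp
    then show False
      using card_facets_at_vertex_orthogonal_to_edge[OF card2 gc pos p0P edges[of j]] card2 by linarith
  qed
  obtain b where "\<forall>i\<in>I0. idot b (vtil (v i)) = - v i $ None"
    using int_linear_system_solvable[OF fin card zb prim sparse, of "\<lambda>i. - v i $ None"] by blast
  then have "facet_orthogonal m v (ext_last b 1) p0"
    by (simp add: facet_orthogonal_def I0_def idot_ext_last)
  then show ?thesis ..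
qed

text \<open>Near p every facet is one through a vertex p0 of the smallest face containing p, so the
  solution found at p0 serves on a whole neighbourhood.\<close>
lemma locally_facet_orthogonal:
  fixes v :: "nat \<Rightarrow> int^('k::finite option)"
  assumes card2: "CARD('k) \<ge> 2" and gc: "good_cone m v"
    and pos: "\<forall>x\<in>pcone m v. x \<noteq> 0 \<longrightarrow> x $ None > 0"
    and sm: "smoothness_criterion m v"
    and p: "p \<in> slice m v"
  shows "\<exists>b V. p \<in> V \<and> openin (top_of_set (slice m v)) V \<and>
           (\<forall>q\<in>V. facet_orthogonal m v (ext_last b 1) q)"
proof -
  have poly: "polytope (slice m v)" using sm unfolding smoothness_criterion_def delzant_def by blast
  then have cv: "convex (slice m v)" and cp: "compact (slice m v)"
    by (auto simp: polytope_imp_convex polytope_imp_compact)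
  define F where "F = \<Inter>(insert (slice m v) {slice_facet m v i | i. i < m \<and> p \<in> slice_facet m v i})"
  have F: "F face_of slice m v" unfolding F_def
    by (rule face_of_Inter) (auto intro: face_of_refl[OF cv] face_of_slice_facet[OF cv])
  have "p \<in> F" using p unfolding F_def by auto
  then obtain p0 where p0F: "p0 extreme_point_of F"
    using extreme_point_exists_convex[OF face_of_imp_compact[OF cv cp F] face_of_imp_convex[OF F]]
    by blast
  then have "{p0} face_of F" by (simp add: face_of_singleton)
  then have "{p0} face_of slice m v" using F by (rule face_of_trans)
  then have "p0 extreme_point_of slice m v" by (simp add: face_of_singleton)
  then obtain b where b: "facet_orthogonal m v (ext_last b 1) p0"
    using vertex_facet_orthogonal[OF card2 gc pos sm] by blast
  have "p0 \<in> F" using p0F by (simp add: extreme_point_of_def)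
  then have p0_facets: "\<forall>i<m. p \<in> slice_facet m v i \<longrightarrow> p0 \<in> slice_facet m v i"
    unfolding F_def by blast
  define C where "C = \<Union>{slice_facet m v i | i. i < m \<and> p0 \<notin> slice_facet m v i}"
  have "closed C"
    unfolding C_def by (rule closed_Union) (auto intro: closed_slice_facet compact_imp_closed[OF cp])
  define V where "V = slice m v \<inter> - C"
  have "openin (top_of_set (slice m v)) V"
    unfolding V_def using \<open>closed C\<close> by (intro openin_open_Int) auto
  moreover have "p \<in> V" unfolding V_def
    using p p0_facets unfolding C_def by blast
  moreover have "\<forall>q\<in>V. facet_orthogonal m v (ext_last b 1) q"
    unfolding V_def facet_orthogonal_def
  proof (intro ballI allI impI)
    fix q i assume "q \<in> slice m v \<inter> - C" "i < m" "q \<in> slice_facet m v i"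
    then have "p0 \<in> slice_facet m v i" unfolding C_def by blast
    then show "idot (ext_last b 1) (v i) = 0" using b \<open>i < m\<close> by (simp add: facet_orthogonal_def)
  qed
  ultimately show ?thesis by blast
qed

section \<open>Closed subgroups of the torus\<close>

lemma closed_torus: "closed (torus :: (complex^'a::finite) set)"
proof -
  have "torus = (\<Inter>j. {t::complex^'a. norm (t $ j) = 1})" by (auto simp: torus_def)
  moreover have "closed {t::complex^'a. norm (t $ j) = 1}" for j
    by (intro closed_Collect_eq continuous_intros)
  ultimately show ?thesis by (metis closed_INT)
qed

lemma torus_nonzero: "t \<in> torus \<Longrightarrow> t $ j \<noteq> 0"
  by (auto simp: torus_def dest: spec[of _ j])

lemma tmul_torus: "s \<in> torus \<Longrightarrow> t \<in> torus \<Longrightarrow> tmul s t \<in> torus"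
  by (simp add: torus_def tmul_def norm_mult)

lemma tinv_torus: "t \<in> torus \<Longrightarrow> tinv t \<in> torus"
  by (simp add: torus_def tinv_def norm_inverse)

lemma tone_torus: "tone \<in> torus"
  by (simp add: torus_def tone_def)

lemma tline_subset_torus: "tline w \<subseteq> torus"
  by (auto simp: tline_def torus_def)

lemma tmul_assoc: "tmul (tmul a b) c = tmul a (tmul b c)"
  by (simp add: tmul_def vec_eq_iff mult.assoc)

lemma tmul_tone: "tmul tone t = t"
  by (simp add: tmul_def tone_def vec_eq_iff)

lemma tinv_tmul_self: "t \<in> torus \<Longrightarrow> tmul (tinv t) t = tone"
  by (simp add: tmul_def tinv_def tone_def vec_eq_iff torus_nonzero)

lemma tmul_tinv_tmul: "t \<in> torus \<Longrightarrow> tmul t (tmul (tinv t) s) = s"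
  by (simp add: tmul_def tinv_def vec_eq_iff torus_nonzero)

lemma tinv_tmul_tinv: "tinv (tmul (tinv g) h) = tmul (tinv h) g"
  by (simp add: tmul_def tinv_def vec_eq_iff mult.commute)

lemma tmul_tinv_trans: "h \<in> torus \<Longrightarrow> tmul (tmul (tinv g) h) (tmul (tinv h) k) = tmul (tinv g) k"
  by (simp add: tmul_def tinv_def vec_eq_iff torus_nonzero)

lemma tmul_tinv_cancel_left:
  "a \<in> torus \<Longrightarrow> tmul (tinv (tmul a t)) (tmul a t') = tmul (tinv t) t'"
  by (simp add: tmul_def tinv_def vec_eq_iff torus_nonzero inverse_mult_distrib)

lemma continuous_on_tmul [continuous_intros]:
  "continuous_on S f \<Longrightarrow> continuous_on S g \<Longrightarrow> continuous_on S (\<lambda>x. tmul (f x) (g x))"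
  unfolding tmul_def by (intro continuous_intros)

definition closed_subgroup :: "(complex^'a) set \<Rightarrow> bool" where
  "closed_subgroup H \<longleftrightarrow> H \<subseteq> torus \<and> closed H \<and> tone \<in> H \<and>
     (\<forall>a\<in>H. \<forall>b\<in>H. tmul a b \<in> H \<and> tinv a \<in> H)"

lemma
  assumes "closed_subgroup H"
  shows closed_subgroup_closed: "closed H"
    and closed_subgroup_tone: "tone \<in> H"
    and closed_subgroup_tmul: "a \<in> H \<Longrightarrow> b \<in> H \<Longrightarrow> tmul a b \<in> H"
    and closed_subgroup_tinv: "a \<in> H \<Longrightarrow> tinv a \<in> H"
  using assms by (simp_all add: closed_subgroup_def)

lemma closed_subgroup_gen_least:
  "closed_subgroup H \<Longrightarrow> S \<subseteq> H \<Longrightarrow> closed_subgroup_gen S \<subseteq> H"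
  unfolding closed_subgroup_gen_def closed_subgroup_def by blast

lemma closed_subgroup_gen_superset: "S \<subseteq> closed_subgroup_gen S"
  unfolding closed_subgroup_gen_def by blast

lemma closed_subgroup_closed_subgroup_gen:
  assumes "S \<subseteq> (torus :: (complex^'a::finite) set)"
  shows "closed_subgroup (closed_subgroup_gen S)"
proof -
  let ?\<F> = "{H. closed_subgroup H \<and> S \<subseteq> H}"
  have eq: "closed_subgroup_gen S = \<Inter>?\<F>"
    by (simp add: closed_subgroup_gen_def closed_subgroup_def)
  have "torus \<in> ?\<F>"
    using assms by (simp add: closed_subgroup_def closed_torus tone_torus tmul_torus tinv_torus)
  then show ?thesis
    unfolding eq closed_subgroup_def[of "\<Inter>?\<F>"]
  proof (intro conjI ballI)
    show "closed (\<Inter>?\<F>)" by (rule closed_Inter) (simp add: closed_subgroup_def)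
    show "tone \<in> \<Inter>?\<F>" by (simp add: closed_subgroup_def)
    fix a b assume "a \<in> \<Inter>?\<F>" "b \<in> \<Inter>?\<F>"
    then show "tmul a b \<in> \<Inter>?\<F>" "tinv a \<in> \<Inter>?\<F>" by (auto simp: closed_subgroup_def)
  qed blast
qed

definition isotropy ::
    "nat \<Rightarrow> (nat \<Rightarrow> int^'a) \<Rightarrow> (nat \<Rightarrow> 'b set) \<Rightarrow> 'b \<Rightarrow> (complex^'a) set" where
  "isotropy m w Fac p = closed_subgroup_gen (\<Union>i\<in>{i. i < m \<and> p \<in> Fac i}. tline (w i))"

lemma closed_subgroup_isotropy:
  "closed_subgroup (isotropy m (w :: nat \<Rightarrow> int^'a::finite) Fac p)"
  unfolding isotropy_def using tline_subset_torus by (intro closed_subgroup_closed_subgroup_gen) blast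

lemma tline_subset_isotropy: "i < m \<Longrightarrow> p \<in> Fac i \<Longrightarrow> tline (w i) \<subseteq> isotropy m w Fac p"
  unfolding isotropy_def by (rule subset_trans[OF _ closed_subgroup_gen_superset]) auto

lemma tor_rel_iff:
  "((g, p), (h, q)) \<in> tor_rel m w P Fac \<longleftrightarrow>
     g \<in> torus \<and> h \<in> torus \<and> p \<in> P \<and> q = p \<and> tmul (tinv g) h \<in> isotropy m w Fac p"
  by (simp add: tor_rel_def isotropy_def)

lemma equiv_tor_rel: "equiv (torus \<times> P) (tor_rel m (w :: nat \<Rightarrow> int^'a::finite) P Fac)"
proof (rule equivI)
  have H: "closed_subgroup (isotropy m w Fac p)" for p by (rule closed_subgroup_isotropy)
  show "tor_rel m w P Fac \<subseteq> (torus \<times> P) \<times> (torus \<times> P)" by (auto simp: tor_rel_def)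
  show "refl_on (torus \<times> P) (tor_rel m w P Fac)"
    by (auto simp: refl_on_def tor_rel_iff tinv_tmul_self intro: closed_subgroup_tone[OF H])
  show "sym (tor_rel m w P Fac)"
  proof (rule symI)
    fix x y assume "(x, y) \<in> tor_rel m w P Fac"
    then obtain g h p where xy: "x = (g, p)" "y = (h, p)" "g \<in> torus" "h \<in> torus" "p \<in> P"
        "tmul (tinv g) h \<in> isotropy m w Fac p"
      by (cases x, cases y) (simp add: tor_rel_iff)
    have "tinv (tmul (tinv g) h) \<in> isotropy m w Fac p" using xy(6) by (rule closed_subgroup_tinv[OF H])
    then show "(y, x) \<in> tor_rel m w P Fac" using xy by (simp add: tor_rel_iff tinv_tmul_tinv)
  qed
  show "trans (tor_rel m w P Fac)"
  proof (rule transI)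
    fix x y z assume "(x, y) \<in> tor_rel m w P Fac" "(y, z) \<in> tor_rel m w P Fac"
    then obtain g h k p where xyz: "x = (g, p)" "y = (h, p)" "z = (k, p)" "g \<in> torus" "h \<in> torus"
        "k \<in> torus" "p \<in> P" "tmul (tinv g) h \<in> isotropy m w Fac p"
        "tmul (tinv h) k \<in> isotropy m w Fac p"
      by (cases x, cases y, cases z) (simp add: tor_rel_iff)
    have "tmul (tmul (tinv g) h) (tmul (tinv h) k) \<in> isotropy m w Fac p"
      using xyz(8,9) by (rule closed_subgroup_tmul[OF H])
    then show "(x, z) \<in> tor_rel m w P Fac" using xyz by (simp add: tor_rel_iff tmul_tinv_trans)
  qed
qed

definition torus_hom :: "(complex^'a \<Rightarrow> complex^'b) \<Rightarrow> bool" where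
  "torus_hom f \<longleftrightarrow> continuous_on torus f \<and> f ` torus \<subseteq> torus \<and> f tone = tone \<and>
     (\<forall>a\<in>torus. \<forall>b\<in>torus. f (tmul a b) = tmul (f a) (f b)) \<and> (\<forall>a\<in>torus. f (tinv a) = tinv (f a))"

lemma closed_subgroup_torus_hom_vimage:
  fixes f :: "complex^'a::finite \<Rightarrow> complex^'b::finite"
  assumes f: "torus_hom f" and H: "closed_subgroup H"
  shows "closed_subgroup (torus \<inter> f -` H)"
  unfolding closed_subgroup_def
proof (intro conjI ballI)
  show "torus \<inter> f -` H \<subseteq> torus" by blast
  have "continuous_on torus f" using f by (simp add: torus_hom_def)
  then show "closed (torus \<inter> f -` H)"
    using continuous_closed_preimage[OF _ closed_torus closed_subgroup_closed[OF H], of f]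
    by (simp add: vimage_def Int_def)
  show "tone \<in> torus \<inter> f -` H"
    using f closed_subgroup_tone[OF H] by (simp add: torus_hom_def tone_torus)
  fix a b assume a: "a \<in> torus \<inter> f -` H" and b: "b \<in> torus \<inter> f -` H"
  show "tmul a b \<in> torus \<inter> f -` H"
    using f a b closed_subgroup_tmul[OF H, of "f a" "f b"] by (simp add: torus_hom_def tmul_torus)
  show "tinv a \<in> torus \<inter> f -` H"
    using f a closed_subgroup_tinv[OF H, of "f a"] by (simp add: torus_hom_def tinv_torus)
qed

lemma torus_hom_closed_subgroup_gen:
  fixes f :: "complex^'a::finite \<Rightarrow> complex^'b::finite"
  assumes "torus_hom f" "closed_subgroup H" "S \<subseteq> torus" "f ` S \<subseteq> H"
    and "g \<in> closed_subgroup_gen S"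
  shows "f g \<in> H"
proof -
  have "closed_subgroup_gen S \<subseteq> torus \<inter> f -` H"
    using assms(3,4)
    by (intro closed_subgroup_gen_least closed_subgroup_torus_hom_vimage[OF assms(1,2)]) auto
  then show ?thesis using assms(5) by blast
qed

section \<open>Characters\<close>

definition tchar :: "int^'a \<Rightarrow> complex^'a \<Rightarrow> complex" where
  "tchar a t = (\<Prod>j\<in>UNIV. power_int (t $ j) (a $ j))"

lemma tchar_tmul: "tchar a (tmul s t) = tchar a s * tchar a t"
  by (simp add: tchar_def tmul_def power_int_mult_distrib prod.distrib)

lemma tchar_tinv: "tchar a (tinv t) = inverse (tchar a t)"
  using prod_inversef[of "\<lambda>j. power_int (t $ j) (a $ j)" UNIV]
  by (simp add: tchar_def tinv_def power_int_inverse o_def)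

lemma tchar_tone: "tchar a tone = 1"
  by (simp add: tchar_def tone_def)

lemma norm_tchar: "t \<in> torus \<Longrightarrow> norm (tchar a t) = 1"
  by (simp add: tchar_def prod_norm[symmetric] norm_power_int torus_def)

lemma tchar_nonzero: "t \<in> torus \<Longrightarrow> tchar a t \<noteq> 0"
  by (metis norm_tchar norm_zero zero_neq_one)

lemma continuous_on_tchar: "continuous_on torus (tchar a)"
  unfolding tchar_def by (intro continuous_intros) (auto simp: torus_nonzero)

lemma continuous_on_tchar_comp:
  "continuous_on S f \<Longrightarrow> f ` S \<subseteq> torus \<Longrightarrow> continuous_on S (\<lambda>x. tchar a (f x))"
  using continuous_on_compose2[OF continuous_on_tchar] by blast

lemma cis_sum: "cis (sum f A) = (\<Prod>x\<in>A. cis (f x))"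
  by (induction A rule: infinite_finite_induct) (auto simp: cis_mult[symmetric])

lemma tchar_tline_point:
  "tchar a (\<chi> j. cis (2 * pi * s * real_of_int (w $ j))) = cis (2 * pi * s * real_of_int (idot a w))"
proof -
  have "tchar a (\<chi> j. cis (2 * pi * s * real_of_int (w $ j)))
      = (\<Prod>j\<in>UNIV. cis (real_of_int (a $ j) * (2 * pi * s * real_of_int (w $ j))))"
    by (simp add: tchar_def cis_power_int)
  also have "\<dots> = cis (2 * pi * s * real_of_int (idot a w))"
    by (simp add: cis_sum[symmetric] idot_def sum_distrib_left mult_ac)
  finally show ?thesis .
qed

lemma tchar_ext_last: "tchar (ext_last b 1) t = tchar b (ttil t) * t $ None"
  by (simp add: tchar_def prod_UNIV_option ttil_def mult.commute)

lemma closed_subgroup_tchar_kernel: "closed_subgroup (torus \<inter> tchar a -` {1})"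
  unfolding closed_subgroup_def
  using continuous_closed_preimage[OF continuous_on_tchar closed_torus, of "{1}"]
  by (auto simp: tmul_torus tinv_torus tone_torus tchar_tmul tchar_tinv tchar_tone)

lemma tchar_isotropy:
  assumes "\<forall>i<m. p \<in> Fac i \<longrightarrow> idot a (w i) = 0" and "g \<in> isotropy m w Fac p"
  shows "tchar a g = 1"
proof -
  have "tline (w i) \<subseteq> torus \<inter> tchar a -` {1}" if "i < m" "p \<in> Fac i" for i
    using assms(1) that tline_subset_torus by (auto simp: tline_def tchar_tline_point)
  then have "isotropy m w Fac p \<subseteq> torus \<inter> tchar a -` {1}"
    unfolding isotropy_def by (intro closed_subgroup_gen_least closed_subgroup_tchar_kernel) blast
  then show ?thesis using assms(2) by blast
qed

section \<open>Comparing the isotropy groups of M and N\<close>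

lemma ttil_torus: "t \<in> torus \<Longrightarrow> ttil t \<in> torus"
  by (simp add: ttil_def torus_def)

lemma ttil_tmul: "ttil (tmul a b) = tmul (ttil a) (ttil b)"
  and ttil_tinv: "ttil (tinv a) = tinv (ttil a)"
  and ttil_tone: "ttil tone = tone"
  by (simp_all add: ttil_def tmul_def tinv_def tone_def vec_eq_iff)

lemma continuous_on_ttil [continuous_intros]:
  "continuous_on S f \<Longrightarrow> continuous_on S (\<lambda>x. ttil (f x))"
  unfolding ttil_def by (intro continuous_intros)

lemma torus_hom_ttil: "torus_hom ttil"
  by (auto simp: torus_hom_def ttil_torus ttil_tmul ttil_tinv ttil_tone intro: continuous_on_ttil[OF continuous_on_id])

lemma ttil_isotropy:
  assumes "g \<in> isotropy m v Fac p"
  shows "ttil g \<in> isotropy m (\<lambda>i. vtil (v i)) Fac p"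
proof (rule torus_hom_closed_subgroup_gen[OF torus_hom_ttil closed_subgroup_isotropy])
  show "(\<Union>i\<in>{i. i < m \<and> p \<in> Fac i}. tline (v i)) \<subseteq> torus" using tline_subset_torus by blast
  have "ttil ` tline (v i) \<subseteq> tline (vtil (v i))" for i
    by (auto simp: tline_def ttil_def vtil_def)
  then show "ttil ` (\<Union>i\<in>{i. i < m \<and> p \<in> Fac i}. tline (v i)) \<subseteq> isotropy m (\<lambda>i. vtil (v i)) Fac p"
    using tline_subset_isotropy[of _ m p Fac "\<lambda>i. vtil (v i)"] by blast
  show "g \<in> closed_subgroup_gen (\<Union>i\<in>{i. i < m \<and> p \<in> Fac i}. tline (v i))"
    using assms by (simp add: isotropy_def)
qed

text \<open>A homomorphic section of ttil whose image lies in the kernel of the character with exponent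
  (b, 1).\<close>
definition tlift :: "int^'k \<Rightarrow> complex^'k \<Rightarrow> complex^('k::finite option)" where
  "tlift b g = ext_last g (inverse (tchar b g))"

lemma ext_last_torus: "s \<in> torus \<Longrightarrow> norm z = 1 \<Longrightarrow> ext_last s z \<in> torus"
  by (auto simp: torus_def ext_last_def split: option.splits)

lemma continuous_on_ext_last [continuous_intros]:
  "continuous_on S f \<Longrightarrow> continuous_on S g \<Longrightarrow> continuous_on S (\<lambda>x. ext_last (f x) (g x))"
  unfolding ext_last_def
proof (intro continuous_on_vec_lambda)
  fix j assume "continuous_on S f" "continuous_on S g"
  then show "continuous_on S (\<lambda>x. case j of None \<Rightarrow> g x | Some l \<Rightarrow> f x $ l)"
    by (cases j) (auto intro: continuous_intros)
qed

lemma tmul_ext_last: "tmul (ext_last s z) (ext_last s' z') = ext_last (tmul s s') (z * z')"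
  and tinv_ext_last: "tinv (ext_last s z) = ext_last (tinv s) (inverse z)"
  by (simp_all add: tmul_def tinv_def ext_last_def vec_eq_iff split: option.splits)

lemma tlift_torus: "s \<in> torus \<Longrightarrow> tlift b s \<in> torus"
  unfolding tlift_def by (auto intro!: ext_last_torus simp: norm_tchar norm_inverse)

lemma tlift_tmul: "tlift b (tmul a c) = tmul (tlift b a) (tlift b c)"
  and tlift_tinv: "tlift b (tinv a) = tinv (tlift b a)"
  by (simp_all add: tlift_def tchar_tmul tmul_ext_last tchar_tinv tinv_ext_last)

lemma torus_hom_tlift: "torus_hom (tlift b)"
  unfolding torus_hom_def
proof (intro conjI ballI)
  show "continuous_on torus (tlift b)"
    unfolding tlift_def
    by (intro continuous_intros continuous_on_id continuous_on_tchar_comp) (auto simp: tchar_nonzero)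
  show "tlift b ` torus \<subseteq> torus" using tlift_torus by blast
  show "tlift b tone = tone"
    using tchar_tone[of b] by (simp add: tlift_def ext_last_def tone_def vec_eq_iff split: option.splits)
qed (simp_all add: tlift_tmul tlift_tinv)

lemma tlift_isotropy:
  assumes orth: "\<forall>i<m. p \<in> Fac i \<longrightarrow> idot (ext_last b 1) (v i) = 0"
    and g: "g \<in> isotropy m (\<lambda>i. vtil (v i)) Fac p"
  shows "tlift b g \<in> isotropy m v Fac p"
proof (rule torus_hom_closed_subgroup_gen[OF torus_hom_tlift closed_subgroup_isotropy])
  show "(\<Union>i\<in>{i. i < m \<and> p \<in> Fac i}. tline (vtil (v i))) \<subseteq> torus" using tline_subset_torus by blast
  have "tlift b ` tline (vtil (v i)) \<subseteq> tline (v i)" if "i < m" "p \<in> Fac i" for i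
  proof clarify
    fix x assume "x \<in> tline (vtil (v i))"
    then obtain s where x: "x = (\<chi> j. cis (2 * pi * s * real_of_int (vtil (v i) $ j)))"
      by (auto simp: tline_def)
    have "idot b (vtil (v i)) + v i $ None = 0" using orth that by (simp add: idot_ext_last)
    then have "idot b (vtil (v i)) = - v i $ None" by simp
    then have "tchar b x = cis (- (2 * pi * s * real_of_int (v i $ None)))"
      by (simp add: x tchar_tline_point)
    then have "inverse (tchar b x) = cis (2 * pi * s * real_of_int (v i $ None))"
      by (simp add: cis_inverse)
    then have "tlift b x = (\<chi> j. cis (2 * pi * s * real_of_int (v i $ j)))"
      by (simp add: tlift_def x ext_last_def vec_eq_iff vtil_def split: option.splits)
    then show "tlift b x \<in> tline (v i)" by (auto simp: tline_def)
  qed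
  then show "tlift b ` (\<Union>i\<in>{i. i < m \<and> p \<in> Fac i}. tline (vtil (v i))) \<subseteq> isotropy m v Fac p"
    using tline_subset_isotropy[of _ m p Fac v] by blast
  show "g \<in> closed_subgroup_gen (\<Union>i\<in>{i. i < m \<and> p \<in> Fac i}. tline (vtil (v i)))"
    using g by (simp add: isotropy_def)
qed

section \<open>Quotient topology\<close>

lemma istopology_quotient:
  assumes R: "equiv (topspace X) R"
  shows "istopology (\<lambda>U. U \<subseteq> topspace X // R \<and> openin X (\<Union>U))"
  unfolding istopology_def
proof (rule conjI; intro allI impI)
  fix S T assume S: "S \<subseteq> topspace X // R \<and> openin X (\<Union>S)"
    and T: "T \<subseteq> topspace X // R \<and> openin X (\<Union>T)"
  have "\<Union>S \<inter> \<Union>T \<subseteq> \<Union>(S \<inter> T)"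
  proof
    fix x assume "x \<in> \<Union>S \<inter> \<Union>T"
    then obtain A B where AB: "A \<in> S" "B \<in> T" "x \<in> A" "x \<in> B" by auto
    then have "A = B" using quotient_disj[OF R, of A B] S T by auto
    then show "x \<in> \<Union>(S \<inter> T)" using AB by auto
  qed
  then have "\<Union>(S \<inter> T) = \<Union>S \<inter> \<Union>T" by auto
  then show "S \<inter> T \<subseteq> topspace X // R \<and> openin X (\<Union>(S \<inter> T))" using S T by auto
next
  fix K assume "\<forall>U\<in>K. U \<subseteq> topspace X // R \<and> openin X (\<Union>U)"
  moreover have "\<Union>(\<Union>K) = (\<Union>U\<in>K. \<Union>U)" by auto
  ultimately show "\<Union>K \<subseteq> topspace X // R \<and> openin X (\<Union>(\<Union>K))" by auto
qed

lemma openin_quotient_topology: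
  assumes "equiv (topspace X) R"
  shows "openin (quotient_topology X R) U \<longleftrightarrow> U \<subseteq> topspace X // R \<and> openin X (\<Union>U)"
  unfolding quotient_topology_def using topology_inverse'[OF istopology_quotient[OF assms]] by simp

lemma topspace_quotient_topology:
  assumes R: "equiv (topspace X) R"
  shows "topspace (quotient_topology X R) = topspace X // R"
proof -
  have "openin (quotient_topology X R) (topspace X // R)"
    using openin_quotient_topology[OF R] Union_quotient[OF R] by simp
  then have "topspace X // R \<subseteq> topspace (quotient_topology X R)" by (rule openin_subset)
  moreover have "topspace (quotient_topology X R) \<subseteq> topspace X // R"
    using openin_quotient_topology[OF R, of "topspace (quotient_topology X R)"] by simp
  ultimately show ?thesis by blast
qed

lemma quotient_class_vimage:
  assumes R: "equiv A R" and U: "U \<subseteq> A // R"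
  shows "{x \<in> A. R `` {x} \<in> U} = \<Union>U"
proof
  show "{x \<in> A. R `` {x} \<in> U} \<subseteq> \<Union>U"
    using R by (auto simp: equiv_def refl_on_def)
  show "\<Union>U \<subseteq> {x \<in> A. R `` {x} \<in> U}"
  proof
    fix x assume "x \<in> \<Union>U"
    then obtain C where C: "C \<in> U" "x \<in> C" by auto
    then obtain y where y: "y \<in> A" "C = R `` {y}" using U by (auto elim: quotientE)
    then have xy: "(y, x) \<in> R" using C by auto
    then have "R `` {x} = R `` {y}" using R by (metis equiv_class_eq equiv_def symD)
    moreover have "x \<in> A" using xy R by (auto simp: equiv_def refl_on_def)
    ultimately show "x \<in> {x \<in> A. R `` {x} \<in> U}" using C y by auto
  qed
qed

lemma quotient_map_quotient_topology:
  assumes R: "equiv (topspace X) R"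
  shows "quotient_map X (quotient_topology X R) (\<lambda>x. R `` {x})"
  unfolding quotient_map_def
proof (intro conjI allI impI)
  show "(\<lambda>x. R `` {x}) ` topspace X = topspace (quotient_topology X R)"
    by (auto simp: topspace_quotient_topology[OF R] quotient_def)
  fix U assume "U \<subseteq> topspace (quotient_topology X R)"
  then have U: "U \<subseteq> topspace X // R" by (simp add: topspace_quotient_topology[OF R])
  show "openin X {x \<in> topspace X. R `` {x} \<in> U} = openin (quotient_topology X R) U"
    using quotient_class_vimage[OF R U] openin_quotient_topology[OF R] U by simp
qed

lemma induced_map_class:
  assumes R: "equiv A R" and S: "equiv B S" and x: "x \<in> A"
    and resp: "\<And>y. (x, y) \<in> R \<Longrightarrow> (f x, f y) \<in> S"
  shows "induced_map S f (R `` {x}) = S `` {f x}"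
proof -
  have "S `` {f y} = S `` {f x}" if "y \<in> R `` {x}" for y
    using resp[of y] that equiv_class_eq[OF S, of "f x" "f y"] by simp
  moreover have "x \<in> R `` {x}" using R x by (auto simp: equiv_def refl_on_def)
  ultimately show ?thesis unfolding induced_map_def by blast
qed

section \<open>The projection and the circle action\<close>

lemma rel_M_iff: "((t, p), (t', p')) \<in> rel_M m v \<longleftrightarrow>
    t \<in> torus \<and> t' \<in> torus \<and> p \<in> slice m v \<and> p' = p \<and>
    tmul (tinv t) t' \<in> isotropy m v (slice_facet m v) p"
  by (simp add: rel_M_def tor_rel_iff)

lemma rel_N_iff: "((s, p), (s', p')) \<in> rel_N m v \<longleftrightarrow>
    s \<in> torus \<and> s' \<in> torus \<and> p \<in> slice m v \<and> p' = p \<and>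
    tmul (tinv s) s' \<in> isotropy m (\<lambda>i. vtil (v i)) (slice_facet m v) p"
  by (simp add: rel_N_def tor_rel_iff)

lemma equiv_rel_M: "equiv (torus \<times> slice m v) (rel_M m v)"
  unfolding rel_M_def by (rule equiv_tor_rel)

lemma equiv_rel_N: "equiv (torus \<times> slice m v) (rel_N m v)"
  unfolding rel_N_def by (rule equiv_tor_rel)

lemma topspace_space_M: "topspace (space_M m v) = (torus \<times> slice m v) // rel_M m v"
  unfolding space_M_def by (subst topspace_quotient_topology) (simp_all add: equiv_rel_M)

lemma topspace_space_N: "topspace (space_N m v) = (torus \<times> slice m v) // rel_N m v"
  unfolding space_N_def by (subst topspace_quotient_topology) (simp_all add: equiv_rel_N)

lemma quotient_map_space_M:
  "quotient_map (top_of_set (torus \<times> slice m v)) (space_M m v) (\<lambda>x. rel_M m v `` {x})"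
  unfolding space_M_def by (rule quotient_map_quotient_topology) (simp add: equiv_rel_M)

lemma quotient_map_space_N:
  "quotient_map (top_of_set (torus \<times> slice m v)) (space_N m v) (\<lambda>x. rel_N m v `` {x})"
  unfolding space_N_def by (rule quotient_map_quotient_topology) (simp add: equiv_rel_N)

lemma proj_d_class:
  assumes t: "t \<in> torus" and p: "p \<in> slice m v"
  shows "proj_d m v (rel_M m v `` {(t, p)}) = rel_N m v `` {(ttil t, p)}"
proof -
  let ?f = "\<lambda>(t, p). (ttil t, p)"
  have "induced_map (rel_N m v) ?f (rel_M m v `` {(t, p)}) = rel_N m v `` {?f (t, p)}"
  proof (rule induced_map_class[OF equiv_rel_M equiv_rel_N])
  show "(t, p) \<in> torus \<times> slice m v" using t p by simp
  fix y assume "((t, p), y) \<in> rel_M m v"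
  then obtain t' where "y = (t', p)" "t' \<in> torus" "tmul (tinv t) t' \<in> isotropy m v (slice_facet m v) p"
    by (cases y) (simp add: rel_M_iff)
    moreover from this(3) have "ttil (tmul (tinv t) t') \<in> isotropy m (\<lambda>i. vtil (v i)) (slice_facet m v) p"
      by (rule ttil_isotropy)
    ultimately show "(?f (t, p), ?f y) \<in> rel_N m v"
      using t p by (simp add: rel_N_iff ttil_torus ttil_tmul ttil_tinv)
  qed
  then show ?thesis by (simp add: proj_d_def)
qed

lemma last_circle_torus: "z \<in> circle \<Longrightarrow> last_circle z \<in> torus"
  by (simp add: last_circle_def torus_def circle_def)

lemma last_circle_one: "last_circle 1 = tone"
  and last_circle_mult: "last_circle (z * w) = tmul (last_circle z) (last_circle w)"
  and ttil_tmul_last_circle: "ttil (tmul (last_circle z) t) = ttil t"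
  and tmul_last_circle_ext_last: "tmul (last_circle z) (ext_last s c) = ext_last s (z * c)"
  by (simp_all add: last_circle_def tone_def tmul_def ttil_def ext_last_def vec_eq_iff
      split: option.splits)

lemma tchar_last_circle: "tchar (ext_last b 1) (last_circle z) = z"
  by (simp add: tchar_def prod_UNIV_option last_circle_def)

lemma continuous_on_last_circle [continuous_intros]:
  assumes "continuous_on S f"
  shows "continuous_on S (\<lambda>x. last_circle (f x))"
  unfolding last_circle_def
proof (intro continuous_on_vec_lambda)
  fix j
  from assms show "continuous_on S (\<lambda>x. if j = None then f x else 1)" by (cases "j = None") auto
qed

lemma act_M_class:
  assumes z: "z \<in> circle" and t: "t \<in> torus" and p: "p \<in> slice m v"
  shows "act_M m v z (rel_M m v `` {(t, p)}) = rel_M m v `` {(tmul (last_circle z) t, p)}"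
proof -
  let ?f = "\<lambda>(t, p). (tmul (last_circle z) t, p)"
  have "induced_map (rel_M m v) ?f (rel_M m v `` {(t, p)}) = rel_M m v `` {?f (t, p)}"
  proof (rule induced_map_class[OF equiv_rel_M equiv_rel_M])
  show "(t, p) \<in> torus \<times> slice m v" using t p by simp
  fix y assume "((t, p), y) \<in> rel_M m v"
  then obtain t' where "y = (t', p)" "t' \<in> torus" "tmul (tinv t) t' \<in> isotropy m v (slice_facet m v) p"
    by (cases y) (simp add: rel_M_iff)
    then show "(?f (t, p), ?f y) \<in> rel_M m v"
      using t p
      by (simp add: rel_M_iff tmul_tinv_cancel_left[OF last_circle_torus[OF z]]
          tmul_torus[OF last_circle_torus[OF z]])
  qed
  then show ?thesis by (simp add: act_M_def)
qed

lemma continuous_map_class_ttil: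
  "continuous_map (top_of_set (torus \<times> slice m v)) (space_N m v) (\<lambda>x. rel_N m v `` {(ttil (fst x), snd x)})"
proof -
  have "continuous_map (top_of_set (torus \<times> slice m v)) (top_of_set (torus \<times> slice m v))
      (\<lambda>x. (ttil (fst x), snd x))"
    by (auto simp: ttil_torus intro!: continuous_intros)
  from continuous_map_compose[OF this quotient_imp_continuous_map[OF quotient_map_space_N]]
  show ?thesis by (simp add: o_def)
qed

lemma continuous_map_proj_d: "continuous_map (space_M m v) (space_N m v) (proj_d m v)"
  by (rule continuous_compose_quotient_map[OF quotient_map_space_M],
      rule continuous_map_eq[OF continuous_map_class_ttil]) (auto simp: proj_d_class)

lemma proj_d_image: "proj_d m v ` topspace (space_M m v) = topspace (space_N m v)"
proof
  show "proj_d m v ` topspace (space_M m v) \<subseteq> topspace (space_N m v)"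
    using continuous_map_image_subset_topspace[OF continuous_map_proj_d] .
  show "topspace (space_N m v) \<subseteq> proj_d m v ` topspace (space_M m v)"
  proof
    fix y assume "y \<in> topspace (space_N m v)"
    then obtain s p where sp: "s \<in> torus" "p \<in> slice m v" "y = rel_N m v `` {(s, p)}"
      unfolding topspace_space_N by (auto elim!: quotientE)
    have "ext_last s 1 \<in> torus" using sp by (simp add: ext_last_torus)
    then show "y \<in> proj_d m v ` topspace (space_M m v)"
      using proj_d_class[of "ext_last s 1" p m v] sp
      by (auto simp: topspace_space_M intro!: image_eqI quotientI)
  qed
qed

lemma locally_compact_circle: "locally_compact_space (top_of_set circle)"
  by (rule compact_imp_locally_compact_space, rule compact_space_subtopology) (simp add: circle_def)

lemma continuous_map_act_M:
  "continuous_map (prod_topology (top_of_set circle) (space_M m v)) (space_M m v) (\<lambda>(z, x). act_M m v z x)"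
proof -
  have Q: "quotient_map (prod_topology (top_of_set circle) (top_of_set (torus \<times> slice m v)))
      (prod_topology (top_of_set circle) (space_M m v)) (\<lambda>(z, x). (z, rel_M m v `` {x}))"
    by (rule quotient_map_prod_right[OF locally_compact_circle _ quotient_map_space_M])
      (simp add: Hausdorff_space_subtopology)
  have "continuous_map (top_of_set (circle \<times> (torus \<times> slice m v))) (top_of_set (torus \<times> slice m v))
      (\<lambda>y. (tmul (last_circle (fst y)) (fst (snd y)), snd (snd y)))"
    by (auto simp: tmul_torus last_circle_torus intro!: continuous_intros)
  from continuous_map_compose[OF this quotient_imp_continuous_map[OF quotient_map_space_M]]
  have c: "continuous_map (top_of_set (circle \<times> (torus \<times> slice m v))) (space_M m v)
      (\<lambda>y. rel_M m v `` {(tmul (last_circle (fst y)) (fst (snd y)), snd (snd y))})"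
    by (simp add: o_def)
  show ?thesis
  proof (rule continuous_compose_quotient_map[OF Q])
    show "continuous_map (prod_topology (top_of_set circle) (top_of_set (torus \<times> slice m v))) (space_M m v)
       ((\<lambda>(z, x). act_M m v z x) \<circ> (\<lambda>(z, x). (z, rel_M m v `` {x})))"
      unfolding prod_topology_subtopology_eu by (rule continuous_map_eq[OF c]) (auto simp: act_M_class)
  qed
qed

lemma space_M_classE:
  assumes "x \<in> topspace (space_M m v)"
  obtains t p where "t \<in> torus" "p \<in> slice m v" "x = rel_M m v `` {(t, p)}"
  using assms unfolding topspace_space_M by (auto elim!: quotientE)

lemma act_M_one: "x \<in> topspace (space_M m v) \<Longrightarrow> act_M m v 1 x = x"
  by (elim space_M_classE) (simp add: act_M_class circle_def last_circle_one tmul_tone)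

lemma act_M_mult:
  assumes "z \<in> circle" "w \<in> circle" "x \<in> topspace (space_M m v)"
  shows "act_M m v (z * w) x = act_M m v z (act_M m v w x)"
proof -
  obtain t p where tp: "t \<in> torus" "p \<in> slice m v" "x = rel_M m v `` {(t, p)}"
    using assms(3) by (rule space_M_classE)
  have "z * w \<in> circle" using assms(1,2) by (simp add: circle_def norm_mult)
  then show ?thesis
    using assms(1,2) tp tmul_torus[OF last_circle_torus[OF assms(2)] tp(1)]
    by (simp add: act_M_class last_circle_mult tmul_assoc)
qed

lemma proj_d_act_M:
  assumes "z \<in> circle" "x \<in> topspace (space_M m v)"
  shows "proj_d m v (act_M m v z x) = proj_d m v x"
proof -
  obtain t p where tp: "t \<in> torus" "p \<in> slice m v" "x = rel_M m v `` {(t, p)}"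
    using assms(2) by (rule space_M_classE)
  then show ?thesis
    using assms(1) tmul_torus[OF last_circle_torus[OF assms(1)] tp(1)]
    by (simp add: act_M_class proj_d_class ttil_tmul_last_circle)
qed

section \<open>Local trivialisations\<close>

context
  fixes m :: nat and v :: "nat \<Rightarrow> int^('k::finite option)" and b :: "int^'k" and V :: "(real^'k) set"
  assumes V_open: "openin (top_of_set (slice m v)) V"
    and V_orth: "\<forall>q\<in>V. facet_orthogonal m v (ext_last b 1) q"
begin

definition chart_base :: "((complex^'k) \<times> (real^'k)) set set" where
  "chart_base = (\<lambda>y. rel_N m v `` {y}) ` (torus \<times> V)"

definition chart_domain :: "((complex^('k option)) \<times> (real^'k)) set set" where
  "chart_domain = {x \<in> topspace (space_M m v). proj_d m v x \<in> chart_base}"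

text \<open>Both maps pick a representative with SOME; chart_class and chart_inv_class show that the
  choice does not matter.\<close>
definition chart ::
    "((complex^('k option)) \<times> (real^'k)) set \<Rightarrow> ((complex^'k) \<times> (real^'k)) set \<times> complex" where
  "chart x = (proj_d m v x, tchar (ext_last b 1) (fst (SOME y. y \<in> x)))"

definition chart_inv ::
    "((complex^'k) \<times> (real^'k)) set \<times> complex \<Rightarrow> ((complex^('k option)) \<times> (real^'k)) set" where
  "chart_inv y = (let r = SOME x. x \<in> fst y in rel_M m v `` {(tmul (last_circle (snd y)) (tlift b (fst r)), snd r)})"

lemma V_subset: "V \<subseteq> slice m v"
  using openin_imp_subset[OF V_open] by simp

lemma tchar_isotropy_M: "q \<in> V \<Longrightarrow> g \<in> isotropy m v (slice_facet m v) q \<Longrightarrow> tchar (ext_last b 1) g = 1"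
  using V_orth by (intro tchar_isotropy) (auto simp: facet_orthogonal_def)

lemma tlift_isotropy_N:
  "q \<in> V \<Longrightarrow> g \<in> isotropy m (\<lambda>i. vtil (v i)) (slice_facet m v) q \<Longrightarrow>
    tlift b g \<in> isotropy m v (slice_facet m v) q"
  using V_orth by (intro tlift_isotropy) (auto simp: facet_orthogonal_def)

lemma class_in_chart_base_iff:
  assumes "s \<in> torus" "q \<in> slice m v"
  shows "rel_N m v `` {(s, q)} \<in> chart_base \<longleftrightarrow> q \<in> V"
proof
  assume "rel_N m v `` {(s, q)} \<in> chart_base"
  then obtain s' q' where "s' \<in> torus" "q' \<in> V" "rel_N m v `` {(s, q)} = rel_N m v `` {(s', q')}"
    unfolding chart_base_def by auto
  then show "q \<in> V"
    using eq_equiv_class_iff[OF equiv_rel_N[of m v], of "(s, q)" "(s', q')"] assms V_subset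
    by (auto simp: rel_N_iff)
qed (use assms in \<open>auto simp: chart_base_def\<close>)

lemma chart_base_vimage:
  "{y \<in> topspace (top_of_set (torus \<times> slice m v)). rel_N m v `` {y} \<in> chart_base} = torus \<times> V"
  using class_in_chart_base_iff V_subset by auto

lemma chart_domain_vimage:
  "{y \<in> topspace (top_of_set (torus \<times> slice m v)). rel_M m v `` {y} \<in> chart_domain} = torus \<times> V"
  unfolding chart_domain_def
  using V_subset
  by (auto simp: topspace_space_M proj_d_class class_in_chart_base_iff ttil_torus intro: quotientI)

lemma openin_chart_base: "openin (space_N m v) chart_base"
proof -
  have "chart_base \<subseteq> topspace (space_N m v)"
    unfolding chart_base_def topspace_space_N using V_subset by (auto intro: quotientI)
  then have "openin (top_of_set (torus \<times> slice m v))
      {y \<in> topspace (top_of_set (torus \<times> slice m v)). rel_N m v `` {y} \<in> chart_base}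
    = openin (space_N m v) chart_base"
    using quotient_map_space_N[of m v] unfolding quotient_map_def by blast
  moreover have "openin (top_of_set (torus \<times> slice m v)) (torus \<times> V)"
    by (rule openin_Times[OF openin_subtopology_self V_open])
  ultimately show ?thesis unfolding chart_base_vimage by blast
qed

lemma openin_chart_domain: "openin (space_M m v) chart_domain"
  unfolding chart_domain_def
  by (rule openin_continuous_map_preimage[OF continuous_map_proj_d openin_chart_base])

lemma subtopology_torus_times_V:
  "subtopology (top_of_set (torus \<times> slice m v)) (torus \<times> V) = top_of_set (torus \<times> V)"
  using V_subset by (simp add: subtopology_subtopology Int_absorb1 subset_iff)

lemma quotient_map_chart_domain:
  "quotient_map (top_of_set (torus \<times> V)) (subtopology (space_M m v) chart_domain) (\<lambda>x. rel_M m v `` {x})"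
  using quotient_map_restriction[OF quotient_map_space_M chart_domain_vimage] openin_chart_domain V_subset
  by (simp add: subtopology_torus_times_V)

lemma quotient_map_chart_base:
  "quotient_map (top_of_set (torus \<times> V)) (subtopology (space_N m v) chart_base) (\<lambda>x. rel_N m v `` {x})"
  using quotient_map_restriction[OF quotient_map_space_N chart_base_vimage] openin_chart_base V_subset
  by (simp add: subtopology_torus_times_V)

lemma chart_class:
  assumes t: "t \<in> torus" and q: "q \<in> V"
  shows "chart (rel_M m v `` {(t, q)}) = (rel_N m v `` {(ttil t, q)}, tchar (ext_last b 1) t)"
proof -
  have qP: "q \<in> slice m v" using q V_subset by blast
  define y where "y = (SOME y. y \<in> rel_M m v `` {(t, q)})"
  have "(t, q) \<in> rel_M m v `` {(t, q)}" using t qP equiv_rel_M by (auto simp: equiv_def refl_on_def)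
  then have "y \<in> rel_M m v `` {(t, q)}" unfolding y_def by (rule someI)
  then obtain t' where y: "y = (t', q)" "t' \<in> torus" "tmul (tinv t) t' \<in> isotropy m v (slice_facet m v) q"
    by (cases y) (auto simp: rel_M_iff)
  have "tchar (ext_last b 1) t' = tchar (ext_last b 1) (tmul t (tmul (tinv t) t'))"
    using t by (simp add: tmul_tinv_tmul)
  also have "\<dots> = tchar (ext_last b 1) t"
    using tchar_isotropy_M[OF q y(3)] by (simp add: tchar_tmul)
  finally show ?thesis unfolding chart_def y_def[symmetric] using proj_d_class[OF t qP] y by simp
qed

lemma chart_inv_class:
  assumes s: "s \<in> torus" and q: "q \<in> V" and z: "z \<in> circle"
  shows "chart_inv (rel_N m v `` {(s, q)}, z) = rel_M m v `` {(tmul (last_circle z) (tlift b s), q)}"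
proof -
  have qP: "q \<in> slice m v" using q V_subset by blast
  define r where "r = (SOME y. y \<in> rel_N m v `` {(s, q)})"
  have "(s, q) \<in> rel_N m v `` {(s, q)}" using s qP equiv_rel_N by (auto simp: equiv_def refl_on_def)
  then have "r \<in> rel_N m v `` {(s, q)}" unfolding r_def by (rule someI)
  then obtain s' where r: "r = (s', q)" "s' \<in> torus"
      "tmul (tinv s) s' \<in> isotropy m (\<lambda>i. vtil (v i)) (slice_facet m v) q"
    by (cases r) (auto simp: rel_N_iff)
  have "tmul (tinv (tmul (last_circle z) (tlift b s))) (tmul (last_circle z) (tlift b s'))
      = tlift b (tmul (tinv s) s')"
    by (simp add: tmul_tinv_cancel_left[OF last_circle_torus[OF z]] tlift_tmul tlift_tinv)
  then have "((tmul (last_circle z) (tlift b s), q), (tmul (last_circle z) (tlift b s'), q)) \<in> rel_M m v"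
    using tlift_isotropy_N[OF q r(3)] qP tmul_torus[OF last_circle_torus[OF z] tlift_torus[OF s]]
      tmul_torus[OF last_circle_torus[OF z] tlift_torus[OF r(2)]]
    by (simp add: rel_M_iff)
  then have "rel_M m v `` {(tmul (last_circle z) (tlift b s'), q)}
      = rel_M m v `` {(tmul (last_circle z) (tlift b s), q)}"
    by (metis equiv_class_eq[OF equiv_rel_M])
  moreover have "chart_inv (rel_N m v `` {(s, q)}, z)
      = rel_M m v `` {(tmul (last_circle z) (tlift b (fst r)), snd r)}"
    unfolding chart_inv_def Let_def r_def by (simp only: fst_conv snd_conv)
  ultimately show ?thesis using r by simp
qed

lemma continuous_map_chart:
  "continuous_map (subtopology (space_M m v) chart_domain)
     (prod_topology (subtopology (space_N m v) chart_base) (top_of_set circle)) chart"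
proof (rule continuous_compose_quotient_map[OF quotient_map_chart_domain])
  have "continuous_map (top_of_set (torus \<times> V)) (space_N m v) (\<lambda>x. rel_N m v `` {(ttil (fst x), snd x)})"
    using continuous_map_from_subtopology[OF continuous_map_class_ttil[of m v], of "torus \<times> V"]
    by (simp add: subtopology_torus_times_V)
  then have base: "continuous_map (top_of_set (torus \<times> V)) (subtopology (space_N m v) chart_base)
      (\<lambda>x. rel_N m v `` {(ttil (fst x), snd x)})"
    using V_subset by (auto simp: continuous_map_in_subtopology class_in_chart_base_iff ttil_torus)
  have fibre: "continuous_map (top_of_set (torus \<times> V)) (top_of_set circle) (\<lambda>x. tchar (ext_last b 1) (fst x))"
    by (auto simp: circle_def norm_tchar intro!: continuous_on_tchar_comp continuous_intros)
  show "continuous_map (top_of_set (torus \<times> V))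
      (prod_topology (subtopology (space_N m v) chart_base) (top_of_set circle)) (chart \<circ> (\<lambda>x. rel_M m v `` {x}))"
    by (rule continuous_map_eq[OF continuous_map_pairedI[OF base fibre]]) (auto simp: chart_class)
qed

lemma continuous_map_chart_inv:
  "continuous_map (prod_topology (subtopology (space_N m v) chart_base) (top_of_set circle))
     (subtopology (space_M m v) chart_domain) chart_inv"
proof -
  have Q: "quotient_map (prod_topology (top_of_set (torus \<times> V)) (top_of_set circle))
      (prod_topology (subtopology (space_N m v) chart_base) (top_of_set circle)) (\<lambda>(x, z). (rel_N m v `` {x}, z))"
    by (rule quotient_map_prod_left[OF locally_compact_circle _ quotient_map_chart_base])
      (simp add: Hausdorff_space_subtopology)
  let ?g = "\<lambda>y. (tmul (last_circle (snd y)) (tlift b (fst (fst y))), snd (fst y))"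
  have "continuous_map (top_of_set ((torus \<times> V) \<times> circle)) (top_of_set (torus \<times> slice m v)) ?g"
    using V_subset torus_hom_tlift[of b]
    by (auto simp: tmul_torus last_circle_torus tlift_torus torus_hom_def
        intro!: continuous_intros continuous_on_compose2[of torus "tlift b"])
  from continuous_map_compose[OF this quotient_imp_continuous_map[OF quotient_map_space_M]]
  have "continuous_map (top_of_set ((torus \<times> V) \<times> circle)) (space_M m v) (\<lambda>y. rel_M m v `` {?g y})"
    by (simp add: o_def)
  moreover have "rel_M m v `` {?g y} \<in> chart_domain" if "y \<in> (torus \<times> V) \<times> circle" for y
    using that chart_domain_vimage tmul_torus[OF last_circle_torus tlift_torus] by fastforce
  ultimately have c: "continuous_map (top_of_set ((torus \<times> V) \<times> circle)) (subtopology (space_M m v) chart_domain)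
      (\<lambda>y. rel_M m v `` {?g y})"
    by (auto simp: continuous_map_in_subtopology)
  show ?thesis
  proof (rule continuous_compose_quotient_map[OF Q])
    show "continuous_map (prod_topology (top_of_set (torus \<times> V)) (top_of_set circle))
        (subtopology (space_M m v) chart_domain) (chart_inv \<circ> (\<lambda>(x, z). (rel_N m v `` {x}, z)))"
      unfolding prod_topology_subtopology_eu
      by (rule continuous_map_eq[OF c]) (auto simp: chart_inv_class)
  qed
qed

lemma chart_domain_classE:
  assumes "x \<in> chart_domain"
  obtains t q where "t \<in> torus" "q \<in> V" "x = rel_M m v `` {(t, q)}"
proof -
  obtain t q where tq: "t \<in> torus" "q \<in> slice m v" "x = rel_M m v `` {(t, q)}"
    using assms unfolding chart_domain_def by (auto elim: space_M_classE)
  then have "q \<in> V" using assms chart_domain_vimage by auto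
  then show thesis using that tq by blast
qed

lemma chart_inv_chart: "x \<in> chart_domain \<Longrightarrow> chart_inv (chart x) = x"
proof (elim chart_domain_classE)
  fix t q assume t: "t \<in> torus" and q: "q \<in> V" and x: "x = rel_M m v `` {(t, q)}"
  have z: "tchar (ext_last b 1) t \<in> circle" using norm_tchar[OF t] by (simp add: circle_def)
  have cancel: "tchar b (ttil t) * t $ None * inverse (tchar b (ttil t)) = t $ None"
    using tchar_nonzero[OF ttil_torus[OF t], of b] by (simp add: field_simps)
  have "tmul (last_circle (tchar (ext_last b 1) t)) (tlift b (ttil t)) = t"
    by (simp only: tlift_def tmul_last_circle_ext_last tchar_ext_last cancel ext_last_ttil)
  then show "chart_inv (chart x) = x"
    using chart_class[OF t q] chart_inv_class[OF ttil_torus[OF t] q z] x by simp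
qed

lemma chart_chart_inv:
  assumes "y \<in> chart_base \<times> circle"
  shows "chart (chart_inv y) = y"
proof -
  obtain s q z where y: "y = (rel_N m v `` {(s, q)}, z)" "s \<in> torus" "q \<in> V" "z \<in> circle"
    using assms unfolding chart_base_def by auto
  have "tchar (ext_last b 1) (tmul (last_circle z) (tlift b s)) = z"
    using tchar_nonzero[OF y(2), of b]
    by (simp add: tlift_def tmul_last_circle_ext_last tchar_ext_last)
  then show ?thesis
    using y chart_inv_class[OF y(2-4)] chart_class[OF tmul_torus[OF last_circle_torus tlift_torus] y(3)]
    by (simp add: tlift_def tmul_last_circle_ext_last)
qed

lemma homeomorphic_map_chart:
  "homeomorphic_map (subtopology (space_M m v) chart_domain)
     (prod_topology (subtopology (space_N m v) chart_base) (top_of_set circle)) chart"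
proof (rule homeomorphic_maps_imp_map[where g = chart_inv])
  have "topspace (prod_topology (subtopology (space_N m v) chart_base) (top_of_set circle)) = chart_base \<times> circle"
    using openin_subset[OF openin_chart_base] by auto
  moreover have "topspace (subtopology (space_M m v) chart_domain) = chart_domain"
    unfolding chart_domain_def by auto
  ultimately show "homeomorphic_maps (subtopology (space_M m v) chart_domain)
     (prod_topology (subtopology (space_N m v) chart_base) (top_of_set circle)) chart chart_inv"
    by (simp add: homeomorphic_maps_def continuous_map_chart continuous_map_chart_inv
        chart_inv_chart chart_chart_inv)
qed

lemma fst_chart: "fst (chart x) = proj_d m v x"
  by (simp add: chart_def)

lemma snd_chart_act_M:
  assumes z: "z \<in> circle" and x: "x \<in> chart_domain"
  shows "snd (chart (act_M m v z x)) = z * snd (chart x)"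
  using x
proof (elim chart_domain_classE)
  fix t q assume t: "t \<in> torus" and q: "q \<in> V" and x: "x = rel_M m v `` {(t, q)}"
  have "q \<in> slice m v" using q V_subset by blast
  then show ?thesis
    using act_M_class[OF z t] x chart_class[OF t q] chart_class[OF tmul_torus[OF last_circle_torus[OF z] t] q]
    by (simp add: tchar_tmul tchar_last_circle)
qed

lemma local_trivialization:
  "openin (space_N m v) chart_base \<and>
   homeomorphic_map (subtopology (space_M m v) {x \<in> topspace (space_M m v). proj_d m v x \<in> chart_base})
     (prod_topology (subtopology (space_N m v) chart_base) (top_of_set circle)) chart \<and>
   (\<forall>x\<in>topspace (space_M m v). proj_d m v x \<in> chart_base \<longrightarrow> fst (chart x) = proj_d m v x) \<and>
   (\<forall>z\<in>circle. \<forall>x\<in>topspace (space_M m v). proj_d m v x \<in> chart_base \<longrightarrow>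
      snd (chart (act_M m v z x)) = z * snd (chart x))"
  using openin_chart_base homeomorphic_map_chart fst_chart snd_chart_act_M
  by (simp add: chart_domain_def)

end

lemma proj_d_locally_trivial:
  fixes v :: "nat \<Rightarrow> int^('k::finite option)"
  assumes card2: "CARD('k) \<ge> 2" and gc: "good_cone m v"
    and pos: "\<forall>x\<in>pcone m v. x \<noteq> 0 \<longrightarrow> x $ None > 0"
    and sm: "smoothness_criterion m v"
    and y: "y \<in> topspace (space_N m v)"
  shows "\<exists>U \<phi>. openin (space_N m v) U \<and> y \<in> U \<and>
    homeomorphic_map (subtopology (space_M m v) {x \<in> topspace (space_M m v). proj_d m v x \<in> U})
      (prod_topology (subtopology (space_N m v) U) (top_of_set circle)) \<phi> \<and>
    (\<forall>x\<in>topspace (space_M m v). proj_d m v x \<in> U \<longrightarrow> fst (\<phi> x) = proj_d m v x) \<and>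
    (\<forall>z\<in>circle. \<forall>x\<in>topspace (space_M m v). proj_d m v x \<in> U \<longrightarrow>
      snd (\<phi> (act_M m v z x)) = z * snd (\<phi> x))"
proof -
  obtain s p where sp: "s \<in> torus" "p \<in> slice m v" "y = rel_N m v `` {(s, p)}"
    using y unfolding topspace_space_N by (auto elim!: quotientE)
  obtain b V where V: "p \<in> V" "openin (top_of_set (slice m v)) V"
      "\<forall>q\<in>V. facet_orthogonal m v (ext_last b 1) q"
    using locally_facet_orthogonal[OF card2 gc pos sm sp(2)] by blast
  have "y \<in> chart_base m v V" using class_in_chart_base_iff[OF V(2,3) sp(1,2)] sp(3) V(1) by simp
  then show ?thesis using local_trivialization[OF V(2,3)] by blast
qed

theorem proposition5p5:
  fixes m :: nat and v :: "nat \<Rightarrow> int^('k::finite option)"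
  assumes "CARD('k) \<ge> 2"
    and "good_cone m v"
    and "strictly_convex (pcone m v)"
    and "\<forall>x\<in>pcone m v. x \<noteq> 0 \<longrightarrow> x $ None > 0"
    and "smoothness_criterion m v"
  shows "principal_S1_bundle (space_M m v) (space_N m v) (act_M m v) (proj_d m v)"
  unfolding principal_S1_bundle_def
  by (intro conjI ballI continuous_map_proj_d proj_d_image continuous_map_act_M act_M_one act_M_mult
      proj_d_act_M proj_d_locally_trivial[OF assms(1,2,4,5)]) assumption+

end
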